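(* Let $G$ be a connected graph that is not complete and let $v\in V(G)$ be a universal vertex. Let $G_{\{v\}}$ be the graph obtained from $G$ by adding a new pendant vertex $x$ adjacent only to $v$. Then $\chi(\mathcal{R}(G))=\chi(\mathcal{R}(G_{\{v\}}))$.
   Context: For a connected graph $G$, a search tree on $G$ is a rooted tree with vertex set $V(G)$ defined recursively: its root is some vertex $r\in V(G)$, and the children of $r$ are the roots of search trees on the connected components of $G-r$. For a rooted tree $T$ and $w\in V(T)$, $T|w$ denotes the subtree rooted at $w$. Let $T$ be a search tree on $G$, let $v$ be a child of $u$ in $T$, and let $p$ be the parent of $u$ (if it exists). The $uv$-rotation transforms $T$ into the search tree $T'$ in which: $u$ is a child of $v$ and $v$ is a child of $p$ (or $v$ is the root if $u$ was the root); every subtree of $u$ in $T$ other than $T|v$ is a subtree of $u$ in $T'$; and every subtree $S$ of $v$ in $T$ is a subtree of $u$ in $T'$ if $u$ is adjacent in $G$ to some vertex of $S$, and a subtree of $v$ in $T'$ otherwise. The rotation graph $\mathcal{R}(G)$ is the graph whose vertices are the search trees on $G$, two being adjacent iff they differ by one rotation. $\chi$ denotes chromatic number. A vertex is universal if it is adjacent to all other vertices. *)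

theory Defs
  imports Main
begin

text \<open>Simple graphs: a vertex set V and an adjacency predicate E.
  Rooted trees on a vertex set V are represented by parent maps
  p :: 'a => 'a option (p x = None for the root and for x outside V).\<close>

definition induced :: "('a \<Rightarrow> 'a \<Rightarrow> bool) \<Rightarrow> 'a set \<Rightarrow> 'a \<Rightarrow> 'a \<Rightarrow> bool" where
  "induced E S a b \<longleftrightarrow> E a b \<and> a \<in> S \<and> b \<in> S"

definition connected_on :: "('a \<Rightarrow> 'a \<Rightarrow> bool) \<Rightarrow> 'a set \<Rightarrow> bool" where
  "connected_on E S \<longleftrightarrow> S \<noteq> {} \<and> (\<forall>a\<in>S. \<forall>b\<in>S. (induced E S)\<^sup>*\<^sup>* a b)"

definition components :: "('a \<Rightarrow> 'a \<Rightarrow> bool) \<Rightarrow> 'a set \<Rightarrow> 'a set set" where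
  "components E S = {C. \<exists>a\<in>S. C = {b. (induced E S)\<^sup>*\<^sup>* a b}}"

inductive search_tree :: "('a \<Rightarrow> 'a \<Rightarrow> bool) \<Rightarrow> 'a set \<Rightarrow> 'a \<Rightarrow> ('a \<Rightarrow> 'a option) \<Rightarrow> bool"
  for E where
  "\<lbrakk> connected_on E V; r \<in> V; p r = None; \<forall>x. x \<notin> V \<longrightarrow> p x = None;
     \<forall>C\<in>components E (V - {r}). \<exists>c\<in>C. p c = Some r \<and>
         search_tree E C c (\<lambda>x. if x \<in> C \<and> x \<noteq> c then p x else None) \<rbrakk>
   \<Longrightarrow> search_tree E V r p"

definition is_search_tree :: "('a \<Rightarrow> 'a \<Rightarrow> bool) \<Rightarrow> 'a set \<Rightarrow> ('a \<Rightarrow> 'a option) \<Rightarrow> bool" where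
  "is_search_tree E V p \<longleftrightarrow> (\<exists>r. search_tree E V r p)"

definition subtree :: "('a \<Rightarrow> 'a option) \<Rightarrow> 'a \<Rightarrow> 'a set" where
  "subtree p w = {x. (\<lambda>a b. p a = Some b)\<^sup>*\<^sup>* x w}"

definition rotate :: "('a \<Rightarrow> 'a \<Rightarrow> bool) \<Rightarrow> ('a \<Rightarrow> 'a option) \<Rightarrow> 'a \<Rightarrow> 'a \<Rightarrow> ('a \<Rightarrow> 'a option)" where
  "rotate E p u v = (\<lambda>x.
     if x = v then p u
     else if x = u then Some v
     else if p x = Some v \<and> (\<exists>y\<in>subtree p x. E u y) then Some u
     else p x)"

definition rot_step :: "('a \<Rightarrow> 'a \<Rightarrow> bool) \<Rightarrow> ('a \<Rightarrow> 'a option) \<Rightarrow> ('a \<Rightarrow> 'a option) \<Rightarrow> bool" where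
  "rot_step E p q \<longleftrightarrow> (\<exists>u v. p v = Some u \<and> q = rotate E p u v)"

definition rot_vertices :: "('a \<Rightarrow> 'a \<Rightarrow> bool) \<Rightarrow> 'a set \<Rightarrow> ('a \<Rightarrow> 'a option) set" where
  "rot_vertices E V = {p. is_search_tree E V p}"

definition rot_adj :: "('a \<Rightarrow> 'a \<Rightarrow> bool) \<Rightarrow> 'a set \<Rightarrow> ('a \<Rightarrow> 'a option) \<Rightarrow> ('a \<Rightarrow> 'a option) \<Rightarrow> bool" where
  "rot_adj E V p q \<longleftrightarrow> p \<in> rot_vertices E V \<and> q \<in> rot_vertices E V \<and>
     (rot_step E p q \<or> rot_step E q p)"

definition chromatic_number :: "'b set \<Rightarrow> ('b \<Rightarrow> 'b \<Rightarrow> bool) \<Rightarrow> nat" where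
  "chromatic_number W A = (LEAST k. \<exists>f :: 'b \<Rightarrow> nat.
      (\<forall>x\<in>W. f x < k) \<and> (\<forall>x\<in>W. \<forall>y\<in>W. A x y \<longrightarrow> f x \<noteq> f y))"

definition add_pendant :: "('a \<Rightarrow> 'a \<Rightarrow> bool) \<Rightarrow> 'a \<Rightarrow> 'a \<Rightarrow> 'a \<Rightarrow> 'a \<Rightarrow> bool" where
  "add_pendant E v x a b \<longleftrightarrow> (E a b \<and> a \<noteq> x \<and> b \<noteq> x) \<or> (a = x \<and> b = v) \<or> (a = v \<and> b = x)"

end

theory Submission
  imports Defs
begin

text \<open>
  Deleting the pendant vertex \<open>x\<close> from a search tree on \<open>G\<^sub>v\<close>, its children
  inheriting its parent, gives a search tree on \<open>G\<close>. Since \<open>v\<close> is universal, \<open>x\<close> is either a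
  leaf hanging from \<open>v\<close> or has exactly one child, and a case analysis shows that a rotation at an
  edge incident with \<open>x\<close> does not change the deleted tree but changes the label of the tree,
  which is \<open>0\<close> if \<open>x\<close> is a leaf and \<open>1\<close> plus the parity of the size of the subtree of \<open>x\<close>
  otherwise; every other rotation commutes with the deletion and keeps the label. So if \<open>c\<close> is a
  proper colouring of \<open>\<R>(G)\<close> with \<open>k \<ge> 3\<close> colours, then
  \<open>T \<mapsto> (c (T - x) + label T) mod k\<close> properly colours \<open>\<R>(G\<^sub>v)\<close>.

  The bound \<open>k \<ge> 3\<close> holds because two non-adjacent vertices \<open>a\<close>, \<open>b\<close> give a closed walk of
  length 5 in the rotation graph of the path \<open>a v b\<close>, and making a new vertex the root embeds
  the rotation graph of a graph into that of any connected graph with one more vertex. The same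
  embedding for \<open>x\<close> maps \<open>\<R>(G)\<close> into \<open>\<R>(G\<^sub>v)\<close> and gives the reverse inequality.
\<close>

section \<open>Components of induced subgraphs\<close>

definition component_of :: "('a \<Rightarrow> 'a \<Rightarrow> bool) \<Rightarrow> 'a set \<Rightarrow> 'a \<Rightarrow> 'a set" where
  "component_of E S a = {b. (induced E S)\<^sup>*\<^sup>* a b}"

lemma induced_rtranclp_mem: "(induced E S)\<^sup>*\<^sup>* a b \<Longrightarrow> a \<in> S \<Longrightarrow> b \<in> S"
  by (induction rule: rtranclp_induct) (auto simp: induced_def)

lemma induced_mono: "T \<subseteq> U \<Longrightarrow> induced E T \<le> induced E U"
  by (auto simp: induced_def)

lemma induced_rtranclp_mono: "T \<subseteq> U \<Longrightarrow> (induced E T)\<^sup>*\<^sup>* a b \<Longrightarrow> (induced E U)\<^sup>*\<^sup>* a b"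
  using rtranclp_mono[OF induced_mono] by blast

lemma induced_cong: "\<forall>a\<in>S. \<forall>b\<in>S. E1 a b = E2 a b \<Longrightarrow> T \<subseteq> S \<Longrightarrow> induced E1 T = induced E2 T"
  by (auto simp: induced_def fun_eq_iff)

lemma component_of_in_components: "a \<in> S \<Longrightarrow> component_of E S a \<in> components E S"
  by (auto simp: components_def component_of_def)

lemma component_of_self: "a \<in> S \<Longrightarrow> a \<in> component_of E S a"
  by (simp add: component_of_def)

lemma components_subset: "C \<in> components E S \<Longrightarrow> C \<subseteq> S"
  by (auto simp: components_def intro: induced_rtranclp_mem)

lemma components_eq_component_of:
  assumes "symp E" and C: "C \<in> components E S" and "a \<in> C"
  shows "C = component_of E S a"
proof -
  obtain a0 where C_def: "C = component_of E S a0"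
    using C by (auto simp: components_def component_of_def)
  have "symp (induced E S)\<^sup>*\<^sup>*"
    using \<open>symp E\<close> by (intro symp_rtranclp) (auto simp: induced_def symp_def)
  moreover have "(induced E S)\<^sup>*\<^sup>* a0 a"
    using \<open>a \<in> C\<close> C_def by (simp add: component_of_def)
  ultimately show ?thesis
    unfolding C_def component_of_def by (auto dest: sympD intro: rtranclp_trans)
qed

lemma components_closed:
  assumes "symp E" "C \<in> components E S" "a \<in> C" "b \<in> S" "E a b"
  shows "b \<in> C"
proof -
  have "C = component_of E S a" by (rule components_eq_component_of[OF assms(1-3)])
  moreover have "induced E S a b"
    using assms(3-5) components_subset[OF assms(2)] by (auto simp: induced_def)
  ultimately show ?thesis by (simp add: component_of_def)
qed

lemma components_of_connected: "connected_on E S \<Longrightarrow> components E S = {S}"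
  by (auto simp: connected_on_def components_def intro: induced_rtranclp_mem)

lemma connected_on_subset_component_of:
  "connected_on E T \<Longrightarrow> T \<subseteq> U \<Longrightarrow> a \<in> T \<Longrightarrow> T \<subseteq> component_of E U a"
  by (auto simp: connected_on_def component_of_def intro: induced_rtranclp_mono)

lemma connected_on_cong:
  "connected_on E1 S \<Longrightarrow> \<forall>a\<in>S. \<forall>b\<in>S. E1 a b = E2 a b \<Longrightarrow> connected_on E2 S"
  using induced_cong[of S E1 E2 S] by (simp add: connected_on_def)

lemma connected_on_universal_vertex:
  assumes "symp E" "v \<in> T" "\<forall>t\<in>T. t \<noteq> v \<longrightarrow> E v t"
  shows "connected_on E T"
proof -
  have "induced E T v a \<and> induced E T a v" if "a \<in> T" "a \<noteq> v" for a
    using assms that by (auto simp: induced_def dest: sympD)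
  then have "(induced E T)\<^sup>*\<^sup>* v a \<and> (induced E T)\<^sup>*\<^sup>* a v" if "a \<in> T" for a
    using that by (cases "a = v") auto
  then show ?thesis
    using \<open>v \<in> T\<close> unfolding connected_on_def by (blast intro: rtranclp_trans)
qed

lemma connected_on_neighbour:
  assumes "connected_on E T" "a \<in> T" "b \<in> T" "a \<noteq> b"
  shows "\<exists>t\<in>T. E a t"
proof -
  have "(induced E T)\<^sup>*\<^sup>* a b" using assms(1-3) by (simp add: connected_on_def)
  then show ?thesis
    by (cases rule: converse_rtranclpE) (use assms(4) in \<open>auto simp: induced_def\<close>)
qed

section \<open>Parent maps and subtrees\<close>

abbreviation parent_rel :: "('a \<Rightarrow> 'a option) \<Rightarrow> 'a \<Rightarrow> 'a \<Rightarrow> bool" where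
  "parent_rel p \<equiv> \<lambda>a b. p a = Some b"

abbreviation acyclic_parents :: "('a \<Rightarrow> 'a option) \<Rightarrow> bool" where
  "acyclic_parents p \<equiv> \<forall>a. \<not> (parent_rel p)\<^sup>+\<^sup>+ a a"

abbreviation restrict_tree :: "('a \<Rightarrow> 'a option) \<Rightarrow> 'a set \<Rightarrow> 'a \<Rightarrow> 'a \<Rightarrow> 'a option" where
  "restrict_tree p C c \<equiv> \<lambda>x. if x \<in> C \<and> x \<noteq> c then p x else None"

lemma subtree_self: "y \<in> subtree p y"
  by (simp add: subtree_def)

lemma subtree_trans: "a \<in> subtree p b \<Longrightarrow> b \<in> subtree p c \<Longrightarrow> a \<in> subtree p c"
  by (auto simp: subtree_def intro: rtranclp_trans)

lemma child_in_subtree: "p a = Some b \<Longrightarrow> a \<in> subtree p b"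
  by (simp add: subtree_def r_into_rtranclp)

lemma subtree_child_closed: "p a = Some b \<Longrightarrow> b \<in> subtree p y \<Longrightarrow> a \<in> subtree p y"
  by (rule subtree_trans[OF child_in_subtree])

lemma parent_in_subtree: "a \<in> subtree p y \<Longrightarrow> a \<noteq> y \<Longrightarrow> p a = Some b \<Longrightarrow> b \<in> subtree p y"
  by (auto simp: subtree_def elim: converse_rtranclpE)

lemma subtree_parentless: "a \<in> subtree p y \<Longrightarrow> p a = None \<Longrightarrow> a = y"
  by (auto simp: subtree_def elim: converse_rtranclpE)

lemma mem_subtree_iff_child:
  "a \<in> subtree p y \<longleftrightarrow> a = y \<or> (\<exists>z. p z = Some y \<and> a \<in> subtree p z)"
  by (auto simp: subtree_def elim: rtranclp.cases intro: rtranclp.rtrancl_into_rtrancl)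

lemma subtree_leaf: "\<forall>z. p z \<noteq> Some y \<Longrightarrow> subtree p y = {y}"
  using mem_subtree_iff_child[of _ p y] by blast

lemma subtree_unique_child:
  "p c = Some y \<Longrightarrow> \<forall>z. p z = Some y \<longrightarrow> z = c \<Longrightarrow> subtree p y = insert y (subtree p c)"
  using mem_subtree_iff_child[of _ p y] by blast

lemma subtree_subset_if_closed:
  assumes "y \<in> S" and closed: "\<And>a b. p a = Some b \<Longrightarrow> b \<in> S \<Longrightarrow> a \<in> S"
  shows "subtree p y \<subseteq> S"
proof
  fix a assume "a \<in> subtree p y"
  then have "(parent_rel p)\<^sup>*\<^sup>* a y" by (simp add: subtree_def)
  then show "a \<in> S"
    by (induction rule: converse_rtranclp_induct) (use \<open>y \<in> S\<close> closed in auto)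
qed

lemma parent_rel_rtranclp_linear:
  "(parent_rel p)\<^sup>*\<^sup>* a b \<Longrightarrow> (parent_rel p)\<^sup>*\<^sup>* a c \<Longrightarrow>
   (parent_rel p)\<^sup>*\<^sup>* b c \<or> (parent_rel p)\<^sup>*\<^sup>* c b"
proof (induction arbitrary: c rule: converse_rtranclp_induct)
  case (step a a')
  from step.prems show ?case
  proof (cases rule: converse_rtranclpE)
    case base
    then show ?thesis using step.hyps by (blast intro: converse_rtranclp_into_rtranclp)
  next
    case (step a'')
    then show ?thesis using step.hyps step.IH by auto
  qed
qed simp

lemma subtree_linear:
  "a \<in> subtree p b \<Longrightarrow> a \<in> subtree p c \<Longrightarrow> b \<in> subtree p c \<or> c \<in> subtree p b"
  using parent_rel_rtranclp_linear[of p a b c] by (simp add: subtree_def)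

lemma subtree_restrict_subset: "subtree (restrict_tree p C c) b \<subseteq> subtree p b"
proof
  fix a assume "a \<in> subtree (restrict_tree p C c) b"
  then have "(parent_rel (restrict_tree p C c))\<^sup>*\<^sup>* a b" by (simp add: subtree_def)
  then have "(parent_rel p)\<^sup>*\<^sup>* a b"
  proof (induction rule: rtranclp_induct)
    case (step b b')
    from step.hyps(2) have "p b = Some b'" by (simp split: if_splits)
    with step.IH show ?case by (rule rtranclp.rtrancl_into_rtrancl)
  qed simp
  then show "a \<in> subtree p b" by (simp add: subtree_def)
qed

lemma acyclic_parents_restrict:
  assumes "acyclic_parents p" shows "acyclic_parents (restrict_tree p C c)"
proof -
  have "(parent_rel p)\<^sup>+\<^sup>+ a b" if "(parent_rel (restrict_tree p C c))\<^sup>+\<^sup>+ a b" for a b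
    using that
  proof (induction rule: tranclp_induct)
    case (base b)
    then have "p a = Some b" by (simp split: if_splits)
    then show ?case by (rule tranclp.r_into_trancl)
  next
    case (step b b')
    from step.hyps(2) have "p b = Some b'" by (simp split: if_splits)
    with step.IH show ?case by (rule tranclp.trancl_into_trancl)
  qed
  with assms show ?thesis by blast
qed

lemma parent_neq: "acyclic_parents p \<Longrightarrow> p a \<noteq> Some a"
  using tranclp.r_into_trancl[of "parent_rel p" a a] by blast

lemma subtree_antisym:
  assumes "acyclic_parents p" "a \<in> subtree p b" "b \<in> subtree p a"
  shows "a = b"
proof (rule ccontr)
  assume "a \<noteq> b"
  with assms(2) have "(parent_rel p)\<^sup>+\<^sup>+ a b" by (auto simp: subtree_def dest: rtranclpD)
  moreover have "(parent_rel p)\<^sup>*\<^sup>* b a" using assms(3) by (simp add: subtree_def)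
  ultimately have "(parent_rel p)\<^sup>+\<^sup>+ a a" by (rule tranclp_rtranclp_tranclp)
  with assms(1) show False by blast
qed

lemma parent_notin_subtree: "acyclic_parents p \<Longrightarrow> p a = Some b \<Longrightarrow> b \<notin> subtree p a"
  unfolding subtree_def by (blast intro: rtranclp_into_tranclp2)

lemma no_child_if_leaf:
  assumes "acyclic_parents p" "subtree p y = {y}" shows "p z \<noteq> Some y"
proof
  assume "p z = Some y"
  then have "z = y" using child_in_subtree[of p z y] assms(2) by simp
  with \<open>p z = Some y\<close> show False using parent_neq[OF assms(1)] by simp
qed

lemma siblings_comparable_eq:
  assumes "acyclic_parents p" "p c = Some r" "p c' = Some r" "c \<in> subtree p c'"
  shows "c = c'"
  using assms parent_in_subtree[OF assms(4) _ assms(2)] parent_notin_subtree[OF assms(1,3)]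
  by blast

lemma subtree_restrict_eq:
  assumes acyc: "acyclic_parents p" and a: "a \<in> subtree p c"
  shows "subtree (restrict_tree p (subtree p c) c) a = subtree p a"
proof
  show "subtree p a \<subseteq> subtree (restrict_tree p (subtree p c) c) a"
  proof (rule subtree_subset_if_closed[OF subtree_self])
    fix a' b assume a'b: "p a' = Some b" and b: "b \<in> subtree (restrict_tree p (subtree p c) c) a"
    have "b \<in> subtree p c"
      using subtree_trans[OF subsetD[OF subtree_restrict_subset b] a] .
    then have "a' \<in> subtree p c" by (rule subtree_child_closed[of p a' b, OF a'b])
    moreover have "a' \<noteq> c"
      using \<open>b \<in> subtree p c\<close> parent_notin_subtree[OF acyc a'b] by blast
    ultimately have "restrict_tree p (subtree p c) c a' = Some b" using a'b by simp
    then show "a' \<in> subtree (restrict_tree p (subtree p c) c) a"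
      using b by (rule subtree_child_closed)
  qed
qed (rule subtree_restrict_subset)

lemma parent_rel_cycle_propagates:
  assumes "(parent_rel p)\<^sup>*\<^sup>* a b" "(parent_rel p)\<^sup>+\<^sup>+ a a"
  shows "(parent_rel p)\<^sup>+\<^sup>+ b b"
  using assms
proof (induction rule: rtranclp_induct)
  case (step b c)
  obtain c' where "p b = Some c'" "(parent_rel p)\<^sup>*\<^sup>* c' b"
    using tranclpD[OF step.IH[OF step.prems]] by blast
  with step.hyps(2) have "(parent_rel p)\<^sup>*\<^sup>* c b" by simp
  then show ?case using step.hyps(2) by (rule rtranclp_into_tranclp1)
qed

section \<open>Search trees\<close>

lemma search_tree_root: "search_tree E V r p \<Longrightarrow> r \<in> V \<and> p r = None"
  by (erule search_tree.cases) simp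

lemma search_tree_outside: "search_tree E V r p \<Longrightarrow> y \<notin> V \<Longrightarrow> p y = None"
  by (erule search_tree.cases) simp

lemma search_tree_connected: "search_tree E V r p \<Longrightarrow> connected_on E V"
  by (erule search_tree.cases) simp

lemma search_tree_components:
  "search_tree E V r p \<Longrightarrow> C \<in> components E (V - {r}) \<Longrightarrow>
   \<exists>c\<in>C. p c = Some r \<and> search_tree E C c (restrict_tree p C c)"
  by (erule search_tree.cases) auto

lemma search_tree_subset_subtree_root: "search_tree E V r p \<Longrightarrow> V \<subseteq> subtree p r"
proof (induction rule: search_tree.induct)
  case (1 V r p)
  show ?case
  proof
    fix y assume "y \<in> V"
    show "y \<in> subtree p r"
    proof (cases "y = r")
      case False
      let ?C = "component_of E (V - {r}) y"
      have C: "?C \<in> components E (V - {r})" and y: "y \<in> ?C"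
        using \<open>y \<in> V\<close> False by (simp_all add: component_of_in_components component_of_self)
      obtain c where c: "p c = Some r" and "?C \<subseteq> subtree (restrict_tree p ?C c) c"
        using bspec[OF "1.IH" C] by blast
      with y have "y \<in> subtree (restrict_tree p ?C c) c" by blast
      then have "y \<in> subtree p c" by (rule subsetD[OF subtree_restrict_subset])
      then show ?thesis using child_in_subtree[of p c r, OF c] by (rule subtree_trans)
    qed (simp add: subtree_self)
  qed
qed

lemma search_tree_subtree_root:
  assumes st: "search_tree E V r p" shows "subtree p r = V"
proof
  show "subtree p r \<subseteq> V"
  proof
    fix a assume a: "a \<in> subtree p r"
    show "a \<in> V"
    proof (rule ccontr)
      assume "a \<notin> V"
      then have "a = r" using subtree_parentless[OF a] search_tree_outside[OF st, of a] by simp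
      with \<open>a \<notin> V\<close> show False using search_tree_root[OF st] by simp
    qed
  qed
qed (rule search_tree_subset_subtree_root[OF st])

lemma search_tree_subtree_subset:
  assumes st: "search_tree E V r p" and "y \<in> V" shows "subtree p y \<subseteq> V"
proof
  fix a assume "a \<in> subtree p y"
  moreover have "y \<in> subtree p r" using assms(2) search_tree_subtree_root[OF st] by simp
  ultimately have "a \<in> subtree p r" by (rule subtree_trans)
  then show "a \<in> V" using search_tree_subtree_root[OF st] by simp
qed

lemma search_tree_parent_mem:
  assumes st: "search_tree E V r p" and ab: "p a = Some b"
  shows "a \<in> V" "b \<in> V" "a \<noteq> r"
proof -
  show "a \<in> V" using search_tree_outside[OF st, of a] ab by (cases "a \<in> V") auto
  show "a \<noteq> r" using search_tree_root[OF st] ab by auto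
  with \<open>a \<in> V\<close> show "b \<in> V"
    using parent_in_subtree[of a p r b] ab search_tree_subtree_root[OF st] by blast
qed

lemma search_tree_has_parent:
  assumes st: "search_tree E V r p" and "y \<in> V" "y \<noteq> r" shows "\<exists>b. p y = Some b"
  using subtree_parentless[of y p r] search_tree_subtree_root[OF st] assms(2,3) by (cases "p y") auto

lemma search_tree_acyclic:
  assumes st: "search_tree E V r p" shows "acyclic_parents p"
proof (intro allI notI)
  fix a assume cyc: "(parent_rel p)\<^sup>+\<^sup>+ a a"
  then obtain b where "p a = Some b" by (auto dest: tranclpD)
  then have "a \<in> subtree p r"
    using search_tree_parent_mem(1)[OF st] search_tree_subtree_root[OF st] by blast
  then have "(parent_rel p)\<^sup>+\<^sup>+ r r"
    using parent_rel_cycle_propagates[OF _ cyc] by (simp add: subtree_def)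
  then show False
    using search_tree_root[OF st] by (auto dest: tranclpD)
qed

lemma search_tree_child_subtree:
  assumes "symp E" and st: "search_tree E V r p"
    and C: "C \<in> components E (V - {r})" and c: "c \<in> C" "p c = Some r"
    and stC: "search_tree E C c (restrict_tree p C c)"
  shows "subtree p c = C"
proof
  show "C \<subseteq> subtree p c"
    using search_tree_subtree_root[OF stC] subtree_restrict_subset[where p=p and C=C and c=c and b=c]
    by simp
  show "subtree p c \<subseteq> C"
  proof
    fix b assume b: "b \<in> subtree p c"
    have acyc: "acyclic_parents p" by (rule search_tree_acyclic[OF st])
    have "b \<in> V"
      using search_tree_subtree_subset[OF st search_tree_parent_mem(1)[OF st c(2)]] b by blast
    moreover have "b \<noteq> r" using b parent_notin_subtree[OF acyc c(2)] by blast
    ultimately have "b \<in> V - {r}" by simp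
    let ?C' = "component_of E (V - {r}) b"
    have C': "?C' \<in> components E (V - {r})" and bC': "b \<in> ?C'"
      using \<open>b \<in> V - {r}\<close> by (simp_all add: component_of_in_components component_of_self)
    obtain c' where c': "c' \<in> ?C'" "p c' = Some r" "search_tree E ?C' c' (restrict_tree p ?C' c')"
      using search_tree_components[OF st C'] by blast
    have "b \<in> subtree (restrict_tree p ?C' c') c'"
      using search_tree_subtree_root[OF c'(3)] bC' by simp
    then have "b \<in> subtree p c'" by (rule subsetD[OF subtree_restrict_subset])
    then have "c \<in> subtree p c' \<or> c' \<in> subtree p c" by (rule subtree_linear[OF b])
    then have "c = c'"
      using siblings_comparable_eq[OF acyc c(2) c'(2)] siblings_comparable_eq[OF acyc c'(2) c(2)]
      by blast
    then have "C = ?C'"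
      using components_eq_component_of[OF \<open>symp E\<close> C c(1)]
        components_eq_component_of[OF \<open>symp E\<close> C' c'(1)] by simp
    then show "b \<in> C" using bC' by simp
  qed
qed

lemma search_tree_subtree_connected:
  assumes "symp E" "search_tree E V r p" "y \<in> V" shows "connected_on E (subtree p y)"
  using assms(2,3)
proof (induction arbitrary: y rule: search_tree.induct)
  case (1 V r p)
  have st: "search_tree E V r p"
    using "1.IH" by (intro search_tree.intros[OF "1.hyps"]) blast
  show ?case
  proof (cases "y = r")
    case True
    then show ?thesis using search_tree_subtree_root[OF st] "1.hyps"(1) by simp
  next
    case False
    let ?C = "component_of E (V - {r}) y"
    have C: "?C \<in> components E (V - {r})" and y: "y \<in> ?C"
      using \<open>y \<in> V\<close> False by (simp_all add: component_of_in_components component_of_self)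
    obtain c where c: "c \<in> ?C" "p c = Some r" "search_tree E ?C c (restrict_tree p ?C c)"
      and IH: "\<forall>y. y \<in> ?C \<longrightarrow> connected_on E (subtree (restrict_tree p ?C c) y)"
      using bspec[OF "1.IH" C] by blast
    have "subtree p c = ?C" by (rule search_tree_child_subtree[OF assms(1) st C c])
    then have "subtree (restrict_tree p ?C c) y = subtree p y"
      using subtree_restrict_eq[OF search_tree_acyclic[OF st], of y c] y by simp
    moreover have "connected_on E (subtree (restrict_tree p ?C c) y)" using IH y by blast
    ultimately show ?thesis by simp
  qed
qed

lemma search_tree_adjacent_comparable:
  assumes "symp E" "search_tree E V r p" "a \<in> V" "b \<in> V" "E a b"
  shows "a \<in> subtree p b \<or> b \<in> subtree p a"
  using assms(2-5)
proof (induction arbitrary: a b rule: search_tree.induct)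
  case (1 V r p)
  have st: "search_tree E V r p"
    using "1.IH" by (intro search_tree.intros[OF "1.hyps"]) blast
  show ?case
  proof (cases "a = r \<or> b = r")
    case True
    then show ?thesis using "1.prems" search_tree_subtree_root[OF st] by auto
  next
    case False
    let ?C = "component_of E (V - {r}) a"
    have C: "?C \<in> components E (V - {r})" and aC: "a \<in> ?C"
      using "1.prems" False by (simp_all add: component_of_in_components component_of_self)
    have bC: "b \<in> ?C" using components_closed[OF assms(1) C aC _ "1.prems"(3)] "1.prems" False by simp
    obtain c where "\<forall>a b. a \<in> ?C \<longrightarrow> b \<in> ?C \<longrightarrow> E a b \<longrightarrow>
        a \<in> subtree (restrict_tree p ?C c) b \<or> b \<in> subtree (restrict_tree p ?C c) a"
      using bspec[OF "1.IH" C] by blast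
    then have "a \<in> subtree (restrict_tree p ?C c) b \<or> b \<in> subtree (restrict_tree p ?C c) a"
      using aC bC "1.prems"(3) by blast
    then show ?thesis
      using subtree_restrict_subset[where p=p and C="?C" and c=c and b=a]
        subtree_restrict_subset[where p=p and C="?C" and c=c and b=b] by blast
  qed
qed

lemma subtree_mem_if_parentless_outside:
  assumes "\<forall>y. y \<notin> V \<longrightarrow> p y = None" "a \<in> subtree p y" "y \<in> V"
  shows "a \<in> V"
proof (rule ccontr)
  assume "a \<notin> V"
  with assms(1) have "p a = None" by blast
  with assms(2) have "a = y" by (rule subtree_parentless)
  with \<open>a \<notin> V\<close> assms(3) show False by simp
qed

lemma component_eq_child_subtree:
  assumes r: "p r = None" and out: "\<forall>y. y \<notin> V \<longrightarrow> p y = None"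
    and reach: "V \<subseteq> subtree p r" and acyc: "acyclic_parents p"
    and conn: "\<forall>y\<in>V. connected_on E (subtree p y)"
    and cmp: "\<forall>a\<in>V. \<forall>b\<in>V. E a b \<longrightarrow> a \<in> subtree p b \<or> b \<in> subtree p a"
    and C: "C \<in> components E (V - {r})"
  shows "\<exists>c. p c = Some r \<and> subtree p c = C"
proof -
  obtain a0 where a0: "a0 \<in> V - {r}" "C = component_of E (V - {r}) a0"
    using C by (auto simp: components_def component_of_def)
  then obtain c where c: "p c = Some r" "a0 \<in> subtree p c"
    using reach mem_subtree_iff_child[of a0 p r] by blast
  have "c \<in> V" using c(1) out by (cases "c \<in> V") auto
  have sub: "subtree p c \<subseteq> V - {r}"
    using subtree_mem_if_parentless_outside[OF out _ \<open>c \<in> V\<close>] parent_notin_subtree[OF acyc c(1)]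
    by blast
  have "subtree p c \<subseteq> C"
    using connected_on_subset_component_of[OF bspec[OF conn \<open>c \<in> V\<close>] sub c(2)] a0(2) by simp
  moreover have "C \<subseteq> subtree p c"
  proof
    fix b assume "b \<in> C"
    then have "(induced E (V - {r}))\<^sup>*\<^sup>* a0 b" using a0(2) by (simp add: component_of_def)
    then show "b \<in> subtree p c"
    proof (induction rule: rtranclp_induct)
      case (step t t')
      then have t: "E t t'" "t \<in> V - {r}" "t' \<in> V - {r}" by (simp_all add: induced_def)
      with cmp consider "t' \<in> subtree p t" | "t \<in> subtree p t'" by blast
      then show ?case
      proof cases
        case 1
        then show ?thesis using step.IH by (rule subtree_trans)
      next
        case 2
        then have "t' \<in> subtree p c \<or> c \<in> subtree p t'" by (rule subtree_linear[OF _ step.IH])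
        moreover have "c \<notin> subtree p t' \<or> c = t'"
          using parent_in_subtree[of c p t' r] c(1) subtree_parentless[of r p t'] r t(3) by blast
        ultimately show ?thesis using subtree_self[of t' p] by blast
      qed
    qed (rule c(2))
  qed
  ultimately show ?thesis using c(1) by blast
qed

lemma search_treeI:
  assumes "finite V" "r \<in> V" "p r = None" "\<forall>y. y \<notin> V \<longrightarrow> p y = None"
    "V \<subseteq> subtree p r" "acyclic_parents p"
    "\<forall>y\<in>V. connected_on E (subtree p y)"
    "\<forall>a\<in>V. \<forall>b\<in>V. E a b \<longrightarrow> a \<in> subtree p b \<or> b \<in> subtree p a"
  shows "search_tree E V r p"
  using assms
proof (induction "card V" arbitrary: V r p rule: less_induct)
  case less
  note fin = less.prems(1) and r = less.prems(2,3) and out = less.prems(4)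
    and reach = less.prems(5) and acyc = less.prems(6) and conn = less.prems(7)
    and cmp = less.prems(8)
  have "subtree p r = V"
    using reach subtree_mem_if_parentless_outside[OF out _ r(1)] by blast
  then have "connected_on E V" using conn r(1) by metis
  then show ?case
  proof (rule search_tree.intros[OF _ r out], intro ballI)
    fix C assume C: "C \<in> components E (V - {r})"
    obtain c where c: "p c = Some r" "subtree p c = C"
      using component_eq_child_subtree[OF r(2) out reach acyc conn cmp C] by blast
    have CV: "C \<subseteq> V - {r}" by (rule components_subset[OF C])
    have cC: "c \<in> C" using c(2) subtree_self[of c p] by simp
    have sub: "subtree (restrict_tree p C c) y = subtree p y" if "y \<in> C" for y
      using subtree_restrict_eq[OF acyc, of y c] that c(2) by simp
    have "search_tree E C c (restrict_tree p C c)"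
    proof (rule less.hyps)
      show "card C < card V"
        using CV r(1) fin by (intro psubset_card_mono) auto
      show "finite C" using CV fin by (auto intro: finite_subset)
      show "C \<subseteq> subtree (restrict_tree p C c) c" using sub[OF cC] c(2) by simp
      show "acyclic_parents (restrict_tree p C c)" by (rule acyclic_parents_restrict[OF acyc])
      show "\<forall>y\<in>C. connected_on E (subtree (restrict_tree p C c) y)"
        using sub conn CV by auto
      show "\<forall>a\<in>C. \<forall>b\<in>C. E a b \<longrightarrow>
          a \<in> subtree (restrict_tree p C c) b \<or> b \<in> subtree (restrict_tree p C c) a"
      proof (intro ballI impI)
        fix a b assume "a \<in> C" "b \<in> C" "E a b"
        with cmp CV have "a \<in> subtree p b \<or> b \<in> subtree p a" by blast
        with sub \<open>a \<in> C\<close> \<open>b \<in> C\<close>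
        show "a \<in> subtree (restrict_tree p C c) b \<or> b \<in> subtree (restrict_tree p C c) a" by simp
      qed
    qed (use cC in simp_all)
    with cC c(1) show "\<exists>c\<in>C. p c = Some r \<and> search_tree E C c (restrict_tree p C c)"
      by blast
  qed
qed

section \<open>Rotations\<close>

context
  fixes E :: "'a \<Rightarrow> 'a \<Rightarrow> bool" and p :: "'a \<Rightarrow> 'a option" and u w :: 'a
  assumes w_child: "p w = Some u" and u_neq_w: "u \<noteq> w"
begin

lemma rotate_at_child: "rotate E p u w w = p u"
  by (simp add: rotate_def)

lemma rotate_at_parent: "rotate E p u w u = Some w"
  using u_neq_w by (simp add: rotate_def)

lemma rotate_other:
  "z \<noteq> u \<Longrightarrow> z \<noteq> w \<Longrightarrow>
   rotate E p u w z = (if p z = Some w \<and> (\<exists>t\<in>subtree p z. E u t) then Some u else p z)"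
  by (simp add: rotate_def)

lemma subtree_rotate_subset_other:
  assumes "y \<noteq> w" shows "subtree (rotate E p u w) y \<subseteq> subtree p y"
proof (rule subtree_subset_if_closed[OF subtree_self])
  have w_in: "w \<in> subtree p u" using child_in_subtree[of p w u, OF w_child] .
  fix a b assume qa: "rotate E p u w a = Some b" and b: "b \<in> subtree p y"
  consider "a = w" | "a = u" | "a \<noteq> u" "a \<noteq> w" by blast
  then show "a \<in> subtree p y"
  proof cases
    case 1
    then have "p u = Some b" using qa rotate_at_child by simp
    then have "u \<in> subtree p y" using b by (rule subtree_child_closed[of p u b])
    with 1 show ?thesis using subtree_trans[OF w_in] by simp
  next
    case 2
    then have "w \<in> subtree p y" using qa rotate_at_parent b by simp
    with 2 show ?thesis using parent_in_subtree[of w p y u] assms w_child by simp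
  next
    case 3
    show ?thesis
    proof (cases "p a = Some w \<and> (\<exists>t\<in>subtree p a. E u t)")
      case True
      then have "u \<in> subtree p y" using qa rotate_other[OF 3] b by simp
      then have "w \<in> subtree p y" using subtree_trans[OF w_in] by simp
      then show ?thesis using True subtree_child_closed[of p a w] by simp
    next
      case False
      then have "rotate E p u w a = p a" unfolding rotate_other[OF 3] by (rule if_not_P)
      then have "p a = Some b" using qa by simp
      then show ?thesis using b by (rule subtree_child_closed[of p a b])
    qed
  qed
qed

lemma subtree_subset_rotate_other:
  assumes "y \<noteq> u" shows "subtree p y \<subseteq> subtree (rotate E p u w) y"
proof (rule subtree_subset_if_closed[OF subtree_self])
  let ?q = "rotate E p u w"
  have u_in: "u \<in> subtree ?q w" using child_in_subtree[of ?q u w, OF rotate_at_parent] .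
  fix a b assume pa: "p a = Some b" and b: "b \<in> subtree ?q y"
  consider "a = w" | "a = u" | "a \<noteq> u" "a \<noteq> w" by blast
  then show "a \<in> subtree ?q y"
  proof cases
    case 1
    then have "u \<in> subtree ?q y" using pa w_child b by simp
    with 1 show ?thesis using parent_in_subtree[of u ?q y w] assms rotate_at_parent by simp
  next
    case 2
    then have "?q w = Some b" using pa rotate_at_child by simp
    then have "w \<in> subtree ?q y" using b by (rule subtree_child_closed[of ?q w b])
    with 2 show ?thesis using subtree_trans[OF u_in] by simp
  next
    case 3
    show ?thesis
    proof (cases "p a = Some w \<and> (\<exists>t\<in>subtree p a. E u t)")
      case True
      then have "?q a = Some u" using rotate_other[OF 3] by simp
      moreover have "u \<in> subtree ?q y" using True pa b subtree_trans[OF u_in] by simp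
      ultimately show ?thesis by (rule subtree_child_closed[of ?q a u])
    next
      case False
      then have "?q a = p a" unfolding rotate_other[OF 3] by (rule if_not_P)
      then have "?q a = Some b" using pa by simp
      then show ?thesis using b by (rule subtree_child_closed[of ?q a b])
    qed
  qed
qed

lemma rotate_subtree_other:
  "y \<noteq> u \<Longrightarrow> y \<noteq> w \<Longrightarrow> subtree (rotate E p u w) y = subtree p y"
  using subtree_rotate_subset_other subtree_subset_rotate_other by blast

lemma rotate_subtree_child: "subtree (rotate E p u w) w = subtree p u"
proof
  let ?q = "rotate E p u w"
  have w_in: "w \<in> subtree p u" using child_in_subtree[of p w u, OF w_child] .
  have u_in: "u \<in> subtree ?q w" using child_in_subtree[of ?q u w, OF rotate_at_parent] .
  show "subtree ?q w \<subseteq> subtree p u"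
  proof (rule subtree_subset_if_closed[OF w_in])
    fix a b assume qa: "?q a = Some b" and b: "b \<in> subtree p u"
    consider "a = w" | "a = u" | "a \<noteq> u" "a \<noteq> w" "p a = Some w" | "a \<noteq> u" "a \<noteq> w" "p a \<noteq> Some w"
      by blast
    then show "a \<in> subtree p u"
    proof cases
      case 3
      then show ?thesis using subtree_child_closed[of p a w] w_in by simp
    next
      case 4
      then have "p a = Some b" using qa rotate_other by simp
      then show ?thesis using b by (rule subtree_child_closed[of p a b])
    qed (use w_in subtree_self in simp_all)
  qed
  show "subtree p u \<subseteq> subtree ?q w"
  proof (rule subtree_subset_if_closed[OF u_in])
    fix a b assume pa: "p a = Some b" and b: "b \<in> subtree ?q w"
    consider "a = w" | "a = u" | "a \<noteq> u" "a \<noteq> w" "p a = Some w \<and> (\<exists>t\<in>subtree p a. E u t)"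
      | "a \<noteq> u" "a \<noteq> w" "\<not> (p a = Some w \<and> (\<exists>t\<in>subtree p a. E u t))"
      by blast
    then show "a \<in> subtree ?q w"
    proof cases
      case 3
      then have "?q a = Some u" using rotate_other by simp
      then show ?thesis using u_in by (rule subtree_child_closed[of ?q a u])
    next
      case 4
      then have "?q a = p a" unfolding rotate_other[OF 4(1,2)] by (intro if_not_P)
      then have "?q a = Some b" using pa by simp
      then show ?thesis using b by (rule subtree_child_closed[of ?q a b])
    qed (use u_in subtree_self in simp_all)
  qed
qed

end

lemma rotate_unmoved:
  assumes "\<And>z. p z = Some w \<Longrightarrow> \<not> (\<exists>t\<in>subtree p z. E u t)" "u \<noteq> w"
  shows "rotate E p u w = p(w := p u, u := Some w)"
proof
  fix z show "rotate E p u w z = (p(w := p u, u := Some w)) z"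
    using assms(1)[of z] assms(2) by (cases "p z = Some w") (auto simp: rotate_def)
qed

lemma rotate_single_moved:
  assumes "p c = Some w" "\<exists>t\<in>subtree p c. E u t" "\<And>z. p z = Some w \<Longrightarrow> z = c"
    "u \<noteq> w" "c \<noteq> u" "c \<noteq> w"
  shows "rotate E p u w = p(w := p u, u := Some w, c := Some u)"
proof
  fix z show "rotate E p u w z = (p(w := p u, u := Some w, c := Some u)) z"
  proof (cases "z = c")
    case False
    then have "p z \<noteq> Some w" using assms(3) by blast
    then show ?thesis using False assms(4) by (simp add: rotate_def)
  qed (use assms(1,2,4-6) in \<open>simp add: rotate_def\<close>)
qed
section \<open>Adding a new root\<close>

lemma search_tree_cong:
  assumes "search_tree E1 V r p" "\<forall>a\<in>V. \<forall>b\<in>V. E1 a b = E2 a b"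
  shows "search_tree E2 V r p"
  using assms
proof (induction rule: search_tree.induct)
  case (1 V r p)
  have conn: "connected_on E2 V" using connected_on_cong[OF "1.hyps"(1) "1.prems"] .
  have comps: "components E1 (V - {r}) = components E2 (V - {r})"
    using induced_cong[OF "1.prems", of "V - {r}"] by (simp add: components_def)
  show "search_tree E2 V r p"
  proof (rule search_tree.intros[OF conn "1.hyps"(2-4)], intro ballI)
    fix C assume "C \<in> components E2 (V - {r})"
    then have C: "C \<in> components E1 (V - {r})" using comps by simp
    then have "C \<subseteq> V" using components_subset by blast
    then have "\<forall>a\<in>C. \<forall>b\<in>C. E1 a b = E2 a b" using "1.prems" by blast
    with bspec[OF "1.IH" C]
    show "\<exists>c\<in>C. p c = Some r \<and> search_tree E2 C c (restrict_tree p C c)" by blast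
  qed
qed

definition add_root :: "'a set \<Rightarrow> 'a \<Rightarrow> ('a \<Rightarrow> 'a option) \<Rightarrow> 'a \<Rightarrow> 'a option" where
  "add_root S y p = (\<lambda>z. if z \<in> S \<and> p z = None then Some y else p z)"

lemma search_tree_add_root:
  assumes "symp E2" and st: "search_tree E1 S r p"
    and agree: "\<forall>a\<in>S. \<forall>b\<in>S. E1 a b = E2 a b" and "y \<notin> S"
    and conn: "connected_on E2 (insert y S)"
  shows "search_tree E2 (insert y S) y (add_root S y p)"
proof (rule search_tree.intros[OF conn])
  have r: "r \<in> S" "p r = None" by (simp_all add: search_tree_root[OF st])
  have out: "\<forall>z. z \<notin> S \<longrightarrow> p z = None" using search_tree_outside[OF st] by blast
  then show "add_root S y p y = None" "\<forall>z. z \<notin> insert y S \<longrightarrow> add_root S y p z = None"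
    using \<open>y \<notin> S\<close> by (simp_all add: add_root_def)
  have comps: "components E2 (insert y S - {y}) = {S}"
    using components_of_connected connected_on_cong[OF search_tree_connected[OF st] agree] \<open>y \<notin> S\<close>
    by simp
  have "restrict_tree (add_root S y p) S r = p"
  proof
    fix z show "restrict_tree (add_root S y p) S r z = p z"
    proof (cases "z \<in> S \<and> z \<noteq> r")
      case True
      then obtain b where "p z = Some b" using search_tree_has_parent[OF st] by blast
      with True show ?thesis by (simp add: add_root_def)
    next
      case False
      then show ?thesis using out r by auto
    qed
  qed
  moreover have "add_root S y p r = Some y" using r by (simp add: add_root_def)
  moreover have "search_tree E2 S r p" by (rule search_tree_cong[OF st agree])
  ultimately show "\<forall>C\<in>components E2 (insert y S - {y}). \<exists>c\<in>C.
      add_root S y p c = Some y \<and> search_tree E2 C c (restrict_tree (add_root S y p) C c)"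
    unfolding comps using r(1) by (intro ballI bexI[of _ r]) simp_all
qed simp

lemma subtree_add_root:
  assumes "p y = None" "z \<noteq> y"
  shows "subtree (add_root S y p) z = subtree p z"
proof
  show "subtree (add_root S y p) z \<subseteq> subtree p z"
  proof (rule subtree_subset_if_closed[OF subtree_self])
    fix a b assume ab: "add_root S y p a = Some b" and b: "b \<in> subtree p z"
    show "a \<in> subtree p z"
    proof (cases "a \<in> S \<and> p a = None")
      case True
      then have "b = y" using ab by (simp add: add_root_def)
      then show ?thesis using subtree_parentless[of y p z] b assms by simp
    next
      case False
      then have "add_root S y p a = p a" unfolding add_root_def by (rule if_not_P)
      then have "p a = Some b" using ab by simp
      then show ?thesis using b by (rule subtree_child_closed[of p a b])
    qed
  qed
  show "subtree p z \<subseteq> subtree (add_root S y p) z"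
  proof (rule subtree_subset_if_closed[OF subtree_self])
    fix a b assume "p a = Some b" "b \<in> subtree (add_root S y p) z"
    then show "a \<in> subtree (add_root S y p) z"
      by (intro subtree_child_closed[of "add_root S y p" a b]) (simp_all add: add_root_def)
  qed
qed

lemma rotate_add_root:
  assumes st: "search_tree E1 S r p" and agree: "\<forall>a\<in>S. \<forall>b\<in>S. E1 a b = E2 a b"
    and "y \<notin> S" and w_child: "p w = Some u"
  shows "add_root S y (rotate E1 p u w) = rotate E2 (add_root S y p) u w"
proof
  fix z
  have "u \<noteq> w" using parent_neq[OF search_tree_acyclic[OF st]] w_child by blast
  have "u \<in> S" "w \<in> S" using search_tree_parent_mem[OF st w_child] by simp_all
  have "p y = None" using search_tree_outside[OF st \<open>y \<notin> S\<close>] .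
  show "add_root S y (rotate E1 p u w) z = rotate E2 (add_root S y p) u w z"
  proof (cases "z \<noteq> u \<and> z \<noteq> w \<and> p z = Some w")
    case True
    then have "z \<in> S" by (blast intro: search_tree_parent_mem(1)[OF st])
    then have "z \<noteq> y" using \<open>y \<notin> S\<close> by blast
    have "subtree p z \<subseteq> S" by (rule search_tree_subtree_subset[OF st \<open>z \<in> S\<close>])
    then have "(\<exists>t\<in>subtree p z. E1 u t) \<longleftrightarrow> (\<exists>t\<in>subtree p z. E2 u t)"
      using agree \<open>u \<in> S\<close> by blast
    then show ?thesis
      using True \<open>z \<in> S\<close> subtree_add_root[of p y z S, OF \<open>p y = None\<close> \<open>z \<noteq> y\<close>]
      by (simp add: rotate_def add_root_def)
  next
    case False
    have "y \<noteq> w" using \<open>w \<in> S\<close> \<open>y \<notin> S\<close> by blast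
    then show ?thesis
      using False \<open>u \<noteq> w\<close> \<open>u \<in> S\<close> \<open>w \<in> S\<close> w_child by (auto simp: rotate_def add_root_def)
  qed
qed

lemma rot_step_add_root:
  assumes st: "search_tree E1 S r p" and agree: "\<forall>a\<in>S. \<forall>b\<in>S. E1 a b = E2 a b"
    and "y \<notin> S" and "rot_step E1 p q"
  shows "rot_step E2 (add_root S y p) (add_root S y q)"
proof -
  obtain u w where w_child: "p w = Some u" and q: "q = rotate E1 p u w"
    using \<open>rot_step E1 p q\<close> by (auto simp: rot_step_def)
  then have "add_root S y q = rotate E2 (add_root S y p) u w"
    using rotate_add_root[OF st agree \<open>y \<notin> S\<close> w_child] by simp
  moreover have "add_root S y p w = Some u" using w_child by (simp add: add_root_def)
  ultimately show ?thesis by (auto simp: rot_step_def)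
qed

lemma rot_adj_add_root:
  assumes "symp E2" and agree: "\<forall>a\<in>S. \<forall>b\<in>S. E1 a b = E2 a b" and "y \<notin> S"
    and conn: "connected_on E2 (insert y S)" and adj: "rot_adj E1 S p q"
  shows "rot_adj E2 (insert y S) (add_root S y p) (add_root S y q)"
proof -
  obtain r1 r2 where st1: "search_tree E1 S r1 p" and st2: "search_tree E1 S r2 q"
    using adj by (auto simp: rot_adj_def rot_vertices_def is_search_tree_def)
  have "add_root S y p \<in> rot_vertices E2 (insert y S)" "add_root S y q \<in> rot_vertices E2 (insert y S)"
    using search_tree_add_root[OF assms(1) st1 agree \<open>y \<notin> S\<close> conn]
      search_tree_add_root[OF assms(1) st2 agree \<open>y \<notin> S\<close> conn]
    by (auto simp: rot_vertices_def is_search_tree_def)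
  moreover have "rot_step E1 p q \<or> rot_step E1 q p" using adj by (simp add: rot_adj_def)
  then have "rot_step E2 (add_root S y p) (add_root S y q) \<or> rot_step E2 (add_root S y q) (add_root S y p)"
    using rot_step_add_root[OF st1 agree \<open>y \<notin> S\<close>] rot_step_add_root[OF st2 agree \<open>y \<notin> S\<close>]
    by blast
  ultimately show ?thesis by (simp add: rot_adj_def)
qed

section \<open>An odd closed walk in the rotation graph\<close>

lemma search_tree_singleton: "search_tree E {z} z (\<lambda>_. None)"
  by (rule search_tree.intros) (auto simp: connected_on_def components_def)

definition path_tree :: "'a \<Rightarrow> 'a \<Rightarrow> 'a \<Rightarrow> 'a \<Rightarrow> 'a option" where
  "path_tree x y z = (\<lambda>t. if t = y then Some x else if t = z then Some y else None)"

definition star_tree :: "'a \<Rightarrow> 'a \<Rightarrow> 'a \<Rightarrow> 'a \<Rightarrow> 'a option" where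
  "star_tree r a b = (\<lambda>t. if t = a \<or> t = b then Some r else None)"

lemma search_tree_path_tree:
  assumes "symp E" "distinct [x, y, z]" "connected_on E {x, y, z}" "E y z"
  shows "search_tree E {x, y, z} x (path_tree x y z)"
proof -
  have agree: "\<forall>a\<in>S. \<forall>b\<in>S. E a b = E a b" for S :: "'a set" by simp
  have "connected_on E {y, z}"
    by (rule connected_on_universal_vertex[OF assms(1), of y]) (use \<open>E y z\<close> in auto)
  then have "search_tree E {y, z} y (add_root {z} y (\<lambda>_. None))"
    using search_tree_add_root[OF assms(1) search_tree_singleton agree] assms(2) by simp
  then have "search_tree E {x, y, z} x (add_root {y, z} x (add_root {z} y (\<lambda>_. None)))"
    using search_tree_add_root[OF assms(1) _ agree _ assms(3)] assms(2) by simp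
  moreover have "add_root {y, z} x (add_root {z} y (\<lambda>_. None)) = path_tree x y z"
    using assms(2) by (auto simp: add_root_def path_tree_def)
  ultimately show ?thesis by simp
qed

lemma components_no_edges:
  assumes "\<forall>a\<in>S. \<forall>b\<in>S. a \<noteq> b \<longrightarrow> \<not> E a b"
  shows "components E S = (\<lambda>a. {a}) ` S"
proof -
  have "(induced E S)\<^sup>*\<^sup>* a b \<longleftrightarrow> a = b" for a b
  proof
    assume "(induced E S)\<^sup>*\<^sup>* a b"
    then show "a = b"
      by (induction rule: rtranclp_induct) (use assms in \<open>auto simp: induced_def\<close>)
  qed simp
  then show ?thesis by (auto simp: components_def)
qed

lemma search_tree_star:
  assumes "connected_on E V" "r \<in> V" "\<forall>a\<in>V - {r}. \<forall>b\<in>V - {r}. a \<noteq> b \<longrightarrow> \<not> E a b"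
  shows "search_tree E V r (\<lambda>t. if t \<in> V - {r} then Some r else None)"
proof (rule search_tree.intros[OF assms(1,2)])
  show "\<forall>C\<in>components E (V - {r}). \<exists>c\<in>C. (if c \<in> V - {r} then Some r else None) = Some r \<and>
      search_tree E C c (restrict_tree (\<lambda>t. if t \<in> V - {r} then Some r else None) C c)"
  proof
    fix C assume "C \<in> components E (V - {r})"
    then obtain c where c: "c \<in> V - {r}" "C = {c}" using components_no_edges[OF assms(3)] by auto
    have "restrict_tree (\<lambda>t. if t \<in> V - {r} then Some r else None) {c} c = (\<lambda>_. None)" by auto
    with c show "\<exists>c\<in>C. (if c \<in> V - {r} then Some r else None) = Some r \<and>
        search_tree E C c (restrict_tree (\<lambda>t. if t \<in> V - {r} then Some r else None) C c)"
      using search_tree_singleton[of E c] by auto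
  qed
qed simp_all

definition has_closed_walk_5 :: "('b \<Rightarrow> 'b \<Rightarrow> bool) \<Rightarrow> bool" where
  "has_closed_walk_5 A \<longleftrightarrow> (\<exists>p1 p2 p3 p4 p5. A p1 p2 \<and> A p2 p3 \<and> A p3 p4 \<and> A p4 p5 \<and> A p5 p1)"

lemma has_closed_walk_5_hom:
  assumes "has_closed_walk_5 A" "\<And>x y. A x y \<Longrightarrow> B (g x) (g y)"
  shows "has_closed_walk_5 B"
  using assms unfolding has_closed_walk_5_def by meson

lemma path3_rotations:
  assumes "distinct [a, v, b]" "E a v" "\<not> E b a"
  shows "rot_step E (star_tree v a b) (path_tree a v b)"
    and "rot_step E (path_tree a v b) (path_tree a b v)"
    and "rot_step E (path_tree a b v) (path_tree b a v)"
    and "rot_step E (path_tree b a v) (path_tree b v a)"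
    and "rot_step E (path_tree b v a) (star_tree v a b)"
proof -
  have ne: "a \<noteq> v" "v \<noteq> a" "a \<noteq> b" "b \<noteq> a" "v \<noteq> b" "b \<noteq> v" using assms(1) by auto
  have leaf1: "subtree (path_tree a b v) v = {v}" and leaf2: "subtree (path_tree b v a) a = {a}"
    using ne by (simp_all add: subtree_leaf path_tree_def)
  show "rot_step E (star_tree v a b) (path_tree a v b)"
    unfolding rot_step_def using ne
    by (intro exI[of _ v] exI[of _ a]) (simp add: rotate_def star_tree_def path_tree_def fun_eq_iff)
  show "rot_step E (path_tree a v b) (path_tree a b v)"
    unfolding rot_step_def using ne
    by (intro exI[of _ v] exI[of _ b]) (simp add: rotate_def path_tree_def fun_eq_iff)
  show "rot_step E (path_tree a b v) (path_tree b a v)"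
    unfolding rot_step_def using ne assms(2) leaf1
    by (intro exI[of _ a] exI[of _ b]) (simp add: rotate_def path_tree_def fun_eq_iff)
  show "rot_step E (path_tree b a v) (path_tree b v a)"
    unfolding rot_step_def using ne
    by (intro exI[of _ a] exI[of _ v]) (simp add: rotate_def path_tree_def fun_eq_iff)
  show "rot_step E (path_tree b v a) (star_tree v a b)"
    unfolding rot_step_def using ne assms(3) leaf2
    by (intro exI[of _ b] exI[of _ v]) (simp add: rotate_def star_tree_def path_tree_def fun_eq_iff)
qed

lemma rotation_graph_path3_closed_walk:
  assumes "symp E" "distinct [a, v, b]" "E a v" "E v b" "\<not> E a b"
  shows "has_closed_walk_5 (rot_adj E {a, v, b})"
proof -
  have "E v a" "E b v" "\<not> E b a" using assms(1,3-5) by (auto dest: sympD)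
  have conn: "connected_on E {a, v, b}"
    by (rule connected_on_universal_vertex[OF assms(1), of v]) (use \<open>E v a\<close> \<open>E v b\<close> in auto)
  have sets: "{a, b, v} = {a, v, b}" "{b, a, v} = {a, v, b}" "{b, v, a} = {a, v, b}" by auto
  have "star_tree v a b = (\<lambda>t. if t \<in> {a, v, b} - {v} then Some v else None)"
    using assms(2) by (auto simp: star_tree_def)
  then have "search_tree E {a, v, b} v (star_tree v a b)"
    using search_tree_star[OF conn] assms(2,5) \<open>\<not> E b a\<close> by auto
  moreover have "search_tree E {a, v, b} a (path_tree a v b)"
    by (rule search_tree_path_tree[OF assms(1,2) conn assms(4)])
  moreover have "search_tree E {a, v, b} a (path_tree a b v)"
    using search_tree_path_tree[of E a b v] assms(1,2) conn \<open>E b v\<close> sets by auto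
  moreover have "search_tree E {a, v, b} b (path_tree b a v)"
    using search_tree_path_tree[of E b a v] assms(1-3) conn sets by auto
  moreover have "search_tree E {a, v, b} b (path_tree b v a)"
    using search_tree_path_tree[of E b v a] assms(1,2) conn \<open>E v a\<close> sets by auto
  ultimately show ?thesis
    using path3_rotations[OF assms(2,3) \<open>\<not> E b a\<close>]
    unfolding has_closed_walk_5_def rot_adj_def rot_vertices_def is_search_tree_def by blast
qed

lemma rotation_graph_closed_walk_insert:
  assumes "symp E" "has_closed_walk_5 (rot_adj E T)" "y \<notin> T" "connected_on E (insert y T)"
  shows "has_closed_walk_5 (rot_adj E (insert y T))"
proof -
  have agree: "\<forall>a\<in>T. \<forall>b\<in>T. E a b = E a b" by simp
  show ?thesis
    by (rule has_closed_walk_5_hom[where g = "add_root T y", OF assms(2)])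
      (rule rot_adj_add_root[OF assms(1) agree assms(3,4)])
qed

lemma rotation_graph_has_closed_walk_5:
  assumes "symp E" "finite V" "v \<in> V" "\<forall>w\<in>V. w \<noteq> v \<longrightarrow> E v w"
    and "a \<in> V" "b \<in> V" "a \<noteq> b" "\<not> E a b"
  shows "has_closed_walk_5 (rot_adj E V)"
proof -
  have "a \<noteq> v" "b \<noteq> v" using assms(1,4-8) by (auto dest: sympD)
  then have "E a v" "E v b" using assms(1,4-6) by (auto dest: sympD)
  have base: "has_closed_walk_5 (rot_adj E {a, v, b})"
    using rotation_graph_path3_closed_walk[OF assms(1) _ \<open>E a v\<close> \<open>E v b\<close> assms(8)]
      \<open>a \<noteq> v\<close> \<open>b \<noteq> v\<close> assms(7) by simp
  have "has_closed_walk_5 (rot_adj E ({a, v, b} \<union> U))" if "finite U" "U \<subseteq> V" for U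
    using that
  proof (induction U rule: finite_induct)
    case (insert y U)
    show ?case
    proof (cases "y \<in> {a, v, b} \<union> U")
      case True
      then show ?thesis using insert by (simp add: insert_absorb)
    next
      case False
      have "connected_on E (insert y ({a, v, b} \<union> U))"
        using insert.prems assms(3-6)
        by (intro connected_on_universal_vertex[OF assms(1), of v]) auto
      then show ?thesis
        using rotation_graph_closed_walk_insert[OF assms(1) _ False] insert by simp
    qed
  qed (simp add: base)
  moreover have "{a, v, b} \<union> V = V" using assms(3,5,6) by auto
  ultimately show ?thesis using assms(2) by (metis order_refl)
qed

section \<open>Colourings\<close>

definition proper_colouring :: "'b set \<Rightarrow> ('b \<Rightarrow> 'b \<Rightarrow> bool) \<Rightarrow> nat \<Rightarrow> ('b \<Rightarrow> nat) \<Rightarrow> bool" where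
  "proper_colouring W A k f \<longleftrightarrow> (\<forall>x\<in>W. f x < k) \<and> (\<forall>x\<in>W. \<forall>y\<in>W. A x y \<longrightarrow> f x \<noteq> f y)"

lemma chromatic_number_le: "proper_colouring W A k f \<Longrightarrow> chromatic_number W A \<le> k"
  unfolding chromatic_number_def proper_colouring_def[symmetric] by (rule Least_le) blast

lemma proper_colouring_chromatic_number:
  "proper_colouring W A k f \<Longrightarrow> \<exists>g. proper_colouring W A (chromatic_number W A) g"
  unfolding chromatic_number_def proper_colouring_def[symmetric] by (rule LeastI) blast

lemma proper_colouring_card:
  assumes "finite W" "\<And>x. \<not> A x x"
  shows "\<exists>f. proper_colouring W A (card W) f"
proof -
  obtain f where "bij_betw f W {0..<card W}" using ex_bij_betw_finite_nat[OF assms(1)] by blast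
  then have "proper_colouring W A (card W) f"
    using assms(2) by (fastforce simp: proper_colouring_def bij_betw_def inj_on_def)
  then show ?thesis by blast
qed

lemma chromatic_number_hom_le:
  assumes "proper_colouring W2 A2 k f" "g ` W1 \<subseteq> W2"
    and "\<And>x y. x \<in> W1 \<Longrightarrow> y \<in> W1 \<Longrightarrow> A1 x y \<Longrightarrow> A2 (g x) (g y)"
  shows "chromatic_number W1 A1 \<le> chromatic_number W2 A2"
proof -
  obtain h where "proper_colouring W2 A2 (chromatic_number W2 A2) h"
    using proper_colouring_chromatic_number[OF assms(1)] by blast
  then have "proper_colouring W1 A1 (chromatic_number W2 A2) (h \<circ> g)"
    using assms(2,3) unfolding proper_colouring_def by (auto simp: image_subset_iff)
  then show ?thesis by (rule chromatic_number_le)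
qed

lemma closed_walk_5_colours_ge_3:
  assumes "has_closed_walk_5 A" "\<And>x y. A x y \<Longrightarrow> x \<in> W \<and> y \<in> W"
    and "proper_colouring W A k f"
  shows "3 \<le> k"
proof -
  obtain p1 p2 p3 p4 p5 where walk: "A p1 p2" "A p2 p3" "A p3 p4" "A p4 p5" "A p5 p1"
    using assms(1) unfolding has_closed_walk_5_def by blast
  then have "f p1 < k" "f p2 < k" "f p3 < k" "f p4 < k" "f p5 < k"
    "f p1 \<noteq> f p2" "f p2 \<noteq> f p3" "f p3 \<noteq> f p4" "f p4 \<noteq> f p5" "f p5 \<noteq> f p1"
    using assms(2,3) unfolding proper_colouring_def by meson+
  then show ?thesis by linarith
qed

lemma rot_vertices_finite:
  assumes "finite V" shows "finite (rot_vertices E V)"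
proof -
  let ?F = "{f. \<forall>z. (z \<in> V \<longrightarrow> f z \<in> insert None (Some ` V)) \<and> (z \<notin> V \<longrightarrow> f z = None)}"
  have "rot_vertices E V \<subseteq> ?F"
  proof
    fix p assume "p \<in> rot_vertices E V"
    then obtain r where st: "search_tree E V r p" by (auto simp: rot_vertices_def is_search_tree_def)
    show "p \<in> ?F"
      using search_tree_parent_mem(2)[OF st] search_tree_outside[OF st]
      by (auto intro: option.exhaust)
  qed
  moreover have "finite ?F"
    using finite_set_of_finite_funs[OF assms, of "insert None (Some ` V)" None] assms by simp
  ultimately show ?thesis by (rule finite_subset)
qed

lemma rot_adj_irrefl: "\<not> rot_adj E V p p"
proof
  assume adj: "rot_adj E V p p"
  then obtain r where st: "search_tree E V r p"
    by (auto simp: rot_adj_def rot_vertices_def is_search_tree_def)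
  obtain u w where "p w = Some u" "p = rotate E p u w"
    using adj by (auto simp: rot_adj_def rot_step_def)
  moreover have "rotate E p u w w = p u" by (simp add: rotate_def)
  ultimately have "p u = Some u" by simp
  then show False using parent_neq[OF search_tree_acyclic[OF st]] by blast
qed

lemma chromatic_number_rotation_graph_ge_3:
  assumes "finite V" "has_closed_walk_5 (rot_adj E V)"
  shows "3 \<le> chromatic_number (rot_vertices E V) (rot_adj E V)"
proof -
  obtain f where "proper_colouring (rot_vertices E V) (rot_adj E V) (card (rot_vertices E V)) f"
    using proper_colouring_card[OF rot_vertices_finite[OF assms(1)]] rot_adj_irrefl by blast
  then obtain c where "proper_colouring (rot_vertices E V) (rot_adj E V)
      (chromatic_number (rot_vertices E V) (rot_adj E V)) c"
    using proper_colouring_chromatic_number by blast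
  then show ?thesis
    using closed_walk_5_colours_ge_3[OF assms(2)] by (auto simp: rot_adj_def)
qed

lemma mod_add_left_cancel_less:
  fixes a l1 l2 k :: nat
  assumes "(a + l1) mod k = (a + l2) mod k" "l1 < k" "l2 < k"
  shows "l1 = l2"
proof -
  have "l1 mod k = l2 mod k" using assms(1) by (simp add: nat_mod_eq_iff)
  with assms(2,3) show ?thesis by simp
qed

section \<open>Adding a pendant vertex\<close>

locale pendant_extension =
  fixes E :: "'a \<Rightarrow> 'a \<Rightarrow> bool" and V :: "'a set" and v x :: 'a
  assumes finite_V: "finite V"
    and edges_in_V: "\<forall>a b. E a b \<longrightarrow> a \<in> V \<and> b \<in> V"
    and symp_E: "symp E"
    and v_in_V: "v \<in> V" and v_universal: "\<forall>w\<in>V. w \<noteq> v \<longrightarrow> E v w"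
    and x_notin_V: "x \<notin> V"
begin

abbreviation F :: "'a \<Rightarrow> 'a \<Rightarrow> bool" where "F \<equiv> add_pendant E v x"
abbreviation W :: "'a set" where "W \<equiv> insert x V"

lemma x_neq_v: "x \<noteq> v"
  using x_notin_V v_in_V by blast

lemma symp_F: "symp F"
  using symp_E by (auto simp: add_pendant_def symp_def)

lemma F_x_left: "F x b \<longleftrightarrow> b = v"
  using x_neq_v edges_in_V x_notin_V by (auto simp: add_pendant_def)

lemma F_x_right: "F a x \<longleftrightarrow> a = v"
  using x_neq_v edges_in_V x_notin_V by (auto simp: add_pendant_def)

lemma F_iff_E: "a \<noteq> x \<Longrightarrow> b \<noteq> x \<Longrightarrow> F a b \<longleftrightarrow> E a b"
  by (auto simp: add_pendant_def)

lemma F_v_universal: "w \<in> W \<Longrightarrow> w \<noteq> v \<Longrightarrow> F v w"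
  using v_universal x_neq_v by (auto simp: add_pendant_def)

lemma F_agrees_E: "\<forall>a\<in>V. \<forall>b\<in>V. E a b = F a b"
  using x_notin_V F_iff_E by metis

lemma connected_on_F: "connected_on F W"
  using v_in_V F_v_universal by (intro connected_on_universal_vertex[OF symp_F, of v]) auto

lemma connected_on_remove_pendant:
  assumes conn: "connected_on F T" and "T \<subseteq> W" and "T - {x} \<noteq> {}"
  shows "connected_on E (T - {x})"
proof (cases "v \<in> T")
  case True
  then show ?thesis
    using assms(2) v_universal x_neq_v by (intro connected_on_universal_vertex[OF symp_E, of v]) auto
next
  case False
  have "x \<notin> T"
  proof
    assume "x \<in> T"
    obtain t where "t \<in> T" "t \<noteq> x" using assms(3) by blast
    then obtain s where "s \<in> T" "F x s" using connected_on_neighbour[OF conn \<open>x \<in> T\<close>] by metis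
    with False show False using F_x_left by simp
  qed
  then have "\<forall>a\<in>T. \<forall>b\<in>T. F a b = E a b" by (auto simp: add_pendant_def)
  then show ?thesis using connected_on_cong[OF conn] \<open>x \<notin> T\<close> by simp
qed

definition drop_pendant :: "('a \<Rightarrow> 'a option) \<Rightarrow> 'a \<Rightarrow> 'a option" where
  "drop_pendant p = (\<lambda>y. if y = x then None else if p y = Some x then p x else p y)"

lemma drop_pendant_parent_tranclp:
  assumes "drop_pendant p a = Some b" shows "(parent_rel p)\<^sup>+\<^sup>+ a b"
proof (cases "p a = Some x")
  case True
  then have "p x = Some b" using assms by (simp add: drop_pendant_def split: if_splits)
  with True show ?thesis by (rule tranclp.trancl_into_trancl[OF tranclp.r_into_trancl])
next
  case False
  then show ?thesis using assms by (simp add: drop_pendant_def tranclp.r_into_trancl split: if_splits)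
qed

lemma acyclic_parents_drop_pendant:
  assumes "acyclic_parents p" shows "acyclic_parents (drop_pendant p)"
proof -
  have "(parent_rel p)\<^sup>+\<^sup>+ a b" if "(parent_rel (drop_pendant p))\<^sup>+\<^sup>+ a b" for a b
    using that
  proof (induction rule: tranclp_induct)
    case (step b c)
    then show ?case using drop_pendant_parent_tranclp[of p b c] by (meson tranclp_trans)
  qed (rule drop_pendant_parent_tranclp)
  with assms show ?thesis by blast
qed

lemma drop_pendant_subtree:
  assumes "z \<noteq> x" shows "subtree (drop_pendant p) z = subtree p z - {x}"
proof
  let ?q = "drop_pendant p"
  have x_notin: "x \<notin> subtree ?q z"
    using subtree_parentless[of x ?q z] assms by (auto simp: drop_pendant_def)
  have "subtree ?q z \<subseteq> subtree p z"
  proof (rule subtree_subset_if_closed[OF subtree_self])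
    fix a b assume "?q a = Some b" "b \<in> subtree p z"
    then show "a \<in> subtree p z"
      using drop_pendant_parent_tranclp[of p a b] by (auto simp: subtree_def dest: tranclp_into_rtranclp
          intro: rtranclp_trans)
  qed
  with x_notin show "subtree ?q z \<subseteq> subtree p z - {x}" by blast
  let ?S = "subtree ?q z \<union> {y. y = x \<and> (\<exists>b. p x = Some b \<and> b \<in> subtree ?q z)}"
  have "subtree p z \<subseteq> ?S"
  proof (rule subtree_subset_if_closed)
    fix a b assume ab: "p a = Some b" and "b \<in> ?S"
    then consider "b \<in> subtree ?q z" | "b = x" "\<exists>c. p x = Some c \<and> c \<in> subtree ?q z" by blast
    then show "a \<in> ?S"
    proof cases
      case 1
      then have "b \<noteq> x" using x_notin by blast
      show ?thesis
      proof (cases "a = x")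
        case False
        then have "?q a = Some b" using ab \<open>b \<noteq> x\<close> by (simp add: drop_pendant_def)
        then show ?thesis using 1 subtree_child_closed[of ?q a b] by blast
      qed (use ab 1 in blast)
    next
      case 2
      then obtain c where c: "p x = Some c" "c \<in> subtree ?q z" by blast
      then have "a \<noteq> x" using x_notin ab 2(1) by auto
      then have "?q a = Some c" using ab 2(1) c(1) by (simp add: drop_pendant_def)
      then show ?thesis using c(2) subtree_child_closed[of ?q a c] by blast
    qed
  qed (simp add: subtree_self)
  then show "subtree p z - {x} \<subseteq> subtree ?q z" by blast
qed

lemma child_eq_child_above_v:
  assumes st: "search_tree F W r p" and c: "p c = Some y" "v \<in> subtree p c" and z: "p z = Some y"
  shows "z = c"
proof -
  have acyc: "acyclic_parents p" by (rule search_tree_acyclic[OF st])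
  have "z \<in> W" by (rule search_tree_parent_mem(1)[OF st z])
  have "v \<in> subtree p z \<or> z \<in> subtree p c"
  proof (cases "z = v")
    case True
    then show ?thesis using subtree_self[of v p] by simp
  next
    case False
    then have "F z v" using F_v_universal[OF \<open>z \<in> W\<close>] symp_F by (blast dest: sympD)
    then have "z \<in> subtree p v \<or> v \<in> subtree p z"
      using search_tree_adjacent_comparable[OF symp_F st \<open>z \<in> W\<close>] v_in_V by blast
    then show ?thesis using subtree_trans[OF _ c(2)] by blast
  qed
  then have "z \<in> subtree p c \<or> c \<in> subtree p z" using subtree_linear[OF c(2)] by blast
  then show ?thesis
    using siblings_comparable_eq[OF acyc z c(1)] siblings_comparable_eq[OF acyc c(1) z] by blast
qed

lemma pendant_leaf_if_v_not_below:
  assumes st: "search_tree F W r p" and nv: "v \<notin> subtree p x"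
  shows "subtree p x = {x}" and "p x = Some v"
proof -
  have acyc: "acyclic_parents p" by (rule search_tree_acyclic[OF st])
  have conn: "connected_on F (subtree p y)" if "y \<in> W" for y
    by (rule search_tree_subtree_connected[OF symp_F st that])
  show "subtree p x = {x}"
  proof (rule ccontr)
    assume "subtree p x \<noteq> {x}"
    then obtain a where "a \<in> subtree p x" "a \<noteq> x" using subtree_self[of x p] by blast
    then obtain t where "t \<in> subtree p x" "F x t"
      using connected_on_neighbour[OF conn subtree_self] by blast
    with nv show False using F_x_left by simp
  qed
  have "x \<noteq> r" using search_tree_subtree_root[OF st] nv v_in_V by auto
  then obtain z where z: "p x = Some z" using search_tree_has_parent[OF st] by blast
  have "x \<in> subtree p v"
    using search_tree_adjacent_comparable[OF symp_F st, of x v] F_x_left v_in_V nv by auto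
  then have "z \<in> subtree p v" using parent_in_subtree[of x p v z] z x_neq_v by simp
  moreover have "v \<in> subtree p z"
  proof -
    have "x \<in> subtree p z" "x \<noteq> z"
      using child_in_subtree[of p x z] parent_neq[OF acyc, of x] z by auto
    then obtain t where "t \<in> subtree p z" "F x t"
      using connected_on_neighbour[OF conn[OF search_tree_parent_mem(2)[OF st z]] _ subtree_self]
      by blast
    then show ?thesis using F_x_left by simp
  qed
  ultimately show "p x = Some v" using subtree_antisym[OF acyc] z by metis
qed

lemma pendant_child_above_v:
  assumes st: "search_tree F W r p" and c: "p c = Some x"
  shows "v \<in> subtree p c" and "p z = Some x \<Longrightarrow> z = c"
proof -
  have "v \<in> subtree p x"
  proof (rule ccontr)
    assume "v \<notin> subtree p x"
    then have "subtree p x = {x}" by (rule pendant_leaf_if_v_not_below(1)[OF st])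
    then show False using no_child_if_leaf[OF search_tree_acyclic[OF st]] c by blast
  qed
  then obtain c' where c': "p c' = Some x" "v \<in> subtree p c'"
    using mem_subtree_iff_child[of v p x] x_neq_v by auto
  have "c = c'" by (rule child_eq_child_above_v[OF st c' c])
  with c' show "v \<in> subtree p c" by simp
  show "p z = Some x \<Longrightarrow> z = c"
    using child_eq_child_above_v[OF st c', of z] \<open>c = c'\<close> by simp
qed

lemma search_tree_drop_pendant_rooted:
  assumes st: "search_tree F W r p"
    and r': "r' \<in> V" "drop_pendant p r' = None" "V \<subseteq> subtree p r'"
  shows "search_tree E V r' (drop_pendant p)"
proof (rule search_treeI[where p = "drop_pendant p", OF finite_V r'(1,2)])
  have acyc: "acyclic_parents p" by (rule search_tree_acyclic[OF st])
  have sub: "subtree (drop_pendant p) y = subtree p y - {x}" if "y \<in> V" for y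
    using drop_pendant_subtree[of y p] that x_notin_V by blast
  show "\<forall>y. y \<notin> V \<longrightarrow> drop_pendant p y = None"
    using search_tree_outside[OF st] by (simp add: drop_pendant_def)
  show "V \<subseteq> subtree (drop_pendant p) r'" using sub[OF r'(1)] r'(3) x_notin_V by blast
  show "acyclic_parents (drop_pendant p)" by (rule acyclic_parents_drop_pendant[OF acyc])
  show "\<forall>y\<in>V. connected_on E (subtree (drop_pendant p) y)"
  proof
    fix y assume "y \<in> V"
    then have "subtree p y - {x} \<noteq> {}" using subtree_self[of y p] x_notin_V by blast
    then show "connected_on E (subtree (drop_pendant p) y)"
      using connected_on_remove_pendant[OF search_tree_subtree_connected[OF symp_F st]
          search_tree_subtree_subset[OF st]] sub \<open>y \<in> V\<close> by simp
  qed
  show "\<forall>a\<in>V. \<forall>b\<in>V. E a b \<longrightarrow>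
      a \<in> subtree (drop_pendant p) b \<or> b \<in> subtree (drop_pendant p) a"
  proof (intro ballI impI)
    fix a b assume "a \<in> V" "b \<in> V" "E a b"
    then have "a \<in> subtree p b \<or> b \<in> subtree p a"
      using search_tree_adjacent_comparable[OF symp_F st, of a b] F_agrees_E by simp
    then show "a \<in> subtree (drop_pendant p) b \<or> b \<in> subtree (drop_pendant p) a"
      using sub \<open>a \<in> V\<close> \<open>b \<in> V\<close> x_notin_V by auto
  qed
qed

lemma search_tree_drop_pendant:
  assumes st: "search_tree F W r p" shows "\<exists>r'. search_tree E V r' (drop_pendant p)"
proof (cases "r = x")
  case False
  then have "r \<in> V" "drop_pendant p r = None"
    using search_tree_root[OF st] by (simp_all add: drop_pendant_def)
  moreover have "V \<subseteq> subtree p r" using search_tree_subtree_root[OF st] by auto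
  ultimately show ?thesis using search_tree_drop_pendant_rooted[OF st] by blast
next
  case True
  have "v \<in> subtree p x" using search_tree_subtree_root[OF st] True v_in_V by simp
  then obtain c where c: "p c = Some x" "v \<in> subtree p c"
    using mem_subtree_iff_child[of v p x] x_neq_v by auto
  have "c \<noteq> x" using c(1) parent_neq[OF search_tree_acyclic[OF st]] by blast
  then have "c \<in> V" using search_tree_parent_mem(1)[OF st c(1)] by simp
  moreover have "drop_pendant p c = None"
    using c(1) \<open>c \<noteq> x\<close> search_tree_root[OF st] True by (simp add: drop_pendant_def)
  moreover have "V \<subseteq> subtree p c"
  proof
    fix a assume "a \<in> V"
    then have "a \<in> subtree p x" "a \<noteq> x" using search_tree_subtree_root[OF st] True x_notin_V by auto
    then obtain z where "p z = Some x" "a \<in> subtree p z" using mem_subtree_iff_child[of a p x] by auto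
    then show "a \<in> subtree p c" using pendant_child_above_v(2)[OF st c(1)] by simp
  qed
  ultimately show ?thesis using search_tree_drop_pendant_rooted[OF st] by blast
qed

definition pendant_label :: "('a \<Rightarrow> 'a option) \<Rightarrow> nat" where
  "pendant_label p = (if subtree p x = {x} then 0 else Suc (card (subtree p x) mod 2))"

lemma pendant_label_less_3: "pendant_label p < 3"
  by (simp add: pendant_label_def)

lemma pendant_label_eq_0_iff: "pendant_label p = 0 \<longleftrightarrow> subtree p x = {x}"
  by (simp add: pendant_label_def)

lemma pendant_label_card_Suc:
  assumes "subtree p x \<noteq> {x}" "subtree q x \<noteq> {x}"
    and "card (subtree q x) = Suc (card (subtree p x))"
  shows "pendant_label q \<noteq> pendant_label p"
  using assms by (simp add: pendant_label_def) presburger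

lemma rotate_up_pendant_leaf:
  assumes st: "search_tree F W r p" and xu: "p x = Some u" and nv: "v \<notin> subtree p x"
  shows "drop_pendant (rotate F p u x) = drop_pendant p"
    and "pendant_label (rotate F p u x) \<noteq> pendant_label p"
proof -
  have acyc: "acyclic_parents p" by (rule search_tree_acyclic[OF st])
  have leaf: "subtree p x = {x}" by (rule pendant_leaf_if_v_not_below(1)[OF st nv])
  have "u = v" using pendant_leaf_if_v_not_below(2)[OF st nv] xu by simp
  have no_child: "p z \<noteq> Some x" for z by (rule no_child_if_leaf[OF acyc leaf])
  show "drop_pendant (rotate F p u x) = drop_pendant p"
    using no_child xu x_neq_v by (auto simp: fun_eq_iff drop_pendant_def rotate_def)
  have "subtree (rotate F p u x) x = subtree p v"
    using rotate_subtree_child[where E=F and p=p and u=u and w=x] xu x_neq_v \<open>u = v\<close> by simp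
  then have "subtree (rotate F p u x) x \<noteq> {x}" using subtree_self[of v p] x_neq_v by auto
  then show "pendant_label (rotate F p u x) \<noteq> pendant_label p"
    using leaf pendant_label_eq_0_iff by metis
qed

lemma rotate_up_pendant_inner:
  assumes st: "search_tree F W r p" and xu: "p x = Some u" and vx: "v \<in> subtree p x"
  shows "drop_pendant (rotate F p u x) = drop_pendant p"
    and "pendant_label (rotate F p u x) \<noteq> pendant_label p"
proof -
  have acyc: "acyclic_parents p" by (rule search_tree_acyclic[OF st])
  obtain c where c: "p c = Some x" "v \<in> subtree p c"
    using mem_subtree_iff_child[of v p x] vx x_neq_v by auto
  have x_child: "p z = Some x \<Longrightarrow> z = c" for z by (rule pendant_child_above_v(2)[OF st c(1)])
  have "u \<noteq> x" using parent_neq[OF acyc] xu by blast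
  have "x \<in> subtree p u" using child_in_subtree[of p x u] xu by simp
  then have "u \<noteq> v" using subtree_antisym[OF acyc vx] x_neq_v by blast
  have "u \<in> W" by (rule search_tree_parent_mem(2)[OF st xu])
  then have "F u v" using F_v_universal \<open>u \<noteq> v\<close> symp_F by (blast dest: sympD)
  have "p u \<noteq> Some x"
    using parent_notin_subtree[OF acyc xu] child_in_subtree[of p u x] by blast
  have "c \<noteq> u" "c \<noteq> x" using c(1) \<open>p u \<noteq> Some x\<close> parent_neq[OF acyc] by auto
  have q: "rotate F p u x = p(x := p u, u := Some x, c := Some u)"
    using rotate_single_moved[of p c x F u] c \<open>F u v\<close> x_child \<open>u \<noteq> x\<close> \<open>c \<noteq> u\<close> \<open>c \<noteq> x\<close>
    by blast
  show "drop_pendant (rotate F p u x) = drop_pendant p"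
  proof
    fix y
    consider "y = x" | "y = u" | "y = c" | "y \<notin> {x, u, c}" by blast
    then show "drop_pendant (rotate F p u x) y = drop_pendant p y"
    proof cases
      case 4
      then have "p y \<noteq> Some x" using x_child by blast
      with 4 show ?thesis by (simp add: q drop_pendant_def)
    qed (use xu c(1) \<open>u \<noteq> x\<close> \<open>p u \<noteq> Some x\<close> \<open>c \<noteq> u\<close> \<open>c \<noteq> x\<close>
      in \<open>simp_all add: q drop_pendant_def\<close>)
  qed
  have "p z = Some u \<Longrightarrow> z = x" for z by (rule child_eq_child_above_v[OF st xu vx])
  then have "subtree p u = insert u (subtree p x)" using subtree_unique_child[of p x u] xu by blast
  moreover have "u \<notin> subtree p x" using parent_notin_subtree[OF acyc xu] .
  moreover have "finite (subtree p x)"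
    using finite_subset[OF search_tree_subtree_subset[OF st] finite_V[THEN finite.insertI]] by simp
  ultimately have "subtree (rotate F p u x) x = insert u (subtree p x)"
    and "card (subtree (rotate F p u x) x) = Suc (card (subtree p x))"
    using rotate_subtree_child[where E=F and p=p and u=u and w=x] xu \<open>u \<noteq> x\<close> by simp_all
  moreover have "subtree p x \<noteq> {x}" using vx x_neq_v by auto
  ultimately show "pendant_label (rotate F p u x) \<noteq> pendant_label p"
    using pendant_label_card_Suc \<open>u \<noteq> x\<close> by auto
qed

lemma rotate_down_pendant_to_v:
  assumes st: "search_tree F W r p" and vx: "p v = Some x"
  shows "drop_pendant (rotate F p x v) = drop_pendant p"
    and "pendant_label (rotate F p x v) \<noteq> pendant_label p"
proof -
  have acyc: "acyclic_parents p" by (rule search_tree_acyclic[OF st])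
  have x_child: "p z = Some x \<Longrightarrow> z = v" for z by (rule pendant_child_above_v(2)[OF st vx])
  have "p x \<noteq> Some x" using parent_neq[OF acyc] .
  have "\<not> (\<exists>t\<in>subtree p z. F x t)" if "p z = Some v" for z
    using parent_notin_subtree[OF acyc that] F_x_left by auto
  then have q: "rotate F p x v = p(v := p x, x := Some v)"
    using rotate_unmoved[of p v F x] x_neq_v by blast
  show "drop_pendant (rotate F p x v) = drop_pendant p"
  proof
    fix y
    consider "y = x" | "y = v" | "y \<notin> {x, v}" by blast
    then show "drop_pendant (rotate F p x v) y = drop_pendant p y"
    proof cases
      case 3
      then have "p y \<noteq> Some x" using x_child by blast
      with 3 show ?thesis by (simp add: q drop_pendant_def)
    qed (use vx \<open>p x \<noteq> Some x\<close> x_neq_v in \<open>simp_all add: q drop_pendant_def\<close>)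
  qed
  have "rotate F p x v z \<noteq> Some x" for z
    using x_child[of z] \<open>p x \<noteq> Some x\<close> x_neq_v by (auto simp: q)
  then have "pendant_label (rotate F p x v) = 0"
    using subtree_leaf pendant_label_eq_0_iff by metis
  moreover have "subtree p x \<noteq> {x}" using child_in_subtree[of p v x] vx x_neq_v by auto
  ultimately show "pendant_label (rotate F p x v) \<noteq> pendant_label p"
    using pendant_label_eq_0_iff by metis
qed

lemma rotate_down_pendant_to_other_eq:
  assumes st: "search_tree F W r p" and cx: "p c = Some x" and d: "p d = Some c" "v \<in> subtree p d"
  shows "rotate F p x c = p(c := p x, x := Some c, d := Some x)"
proof (rule rotate_single_moved[of p d c F x, OF d(1)])
  have acyc: "acyclic_parents p" by (rule search_tree_acyclic[OF st])
  show "\<exists>t\<in>subtree p d. F x t" using d(2) F_x_left by blast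
  show "p z = Some c \<Longrightarrow> z = d" for z by (rule child_eq_child_above_v[OF st d])
  show "x \<noteq> c" "d \<noteq> c" using parent_neq[OF acyc] cx d(1) by auto
  show "d \<noteq> x"
    using child_in_subtree[of p d c] d(1) parent_notin_subtree[OF acyc cx] by auto
qed

lemma subtree_rotate_down_pendant_to_other:
  assumes st: "search_tree F W r p" and cx: "p c = Some x" and d: "p d = Some c" "v \<in> subtree p d"
  shows "subtree (rotate F p x c) x = insert x (subtree p d)"
proof -
  have acyc: "acyclic_parents p" by (rule search_tree_acyclic[OF st])
  note q = rotate_down_pendant_to_other_eq[OF st cx d]
  have "p x \<noteq> Some x" "x \<noteq> c" "d \<noteq> c" "d \<noteq> x"
    using parent_neq[OF acyc] cx d(1) child_in_subtree[of p d c] parent_notin_subtree[OF acyc cx]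
    by auto
  have q_child: "z = d" if qz: "rotate F p x c z = Some x" for z
  proof (rule ccontr)
    assume "z \<noteq> d"
    then consider "z = c" | "z = x" | "z \<notin> {c, x, d}" by blast
    then show False
    proof cases
      case 3
      then have "p z = Some x" using qz by (simp add: q)
      with 3 show False using pendant_child_above_v(2)[OF st cx] by blast
    qed (use qz \<open>z \<noteq> d\<close> \<open>p x \<noteq> Some x\<close> \<open>x \<noteq> c\<close> in \<open>simp_all add: q\<close>)
  qed
  have "rotate F p x c d = Some x" using \<open>d \<noteq> x\<close> \<open>d \<noteq> c\<close> by (simp add: q)
  then have "subtree (rotate F p x c) x = insert x (subtree (rotate F p x c) d)"
    using subtree_unique_child[of "rotate F p x c" d x] q_child by blast
  also have "subtree (rotate F p x c) d = subtree p d"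
    using rotate_subtree_other[where E=F and p=p and u=x and w=c and y=d] cx \<open>x \<noteq> c\<close>
      \<open>d \<noteq> x\<close> \<open>d \<noteq> c\<close> by simp
  finally show ?thesis .
qed

lemma rotate_down_pendant_to_other:
  assumes st: "search_tree F W r p" and cx: "p c = Some x" and d: "p d = Some c" "v \<in> subtree p d"
  shows "drop_pendant (rotate F p x c) = drop_pendant p"
    and "pendant_label (rotate F p x c) \<noteq> pendant_label p"
proof -
  have acyc: "acyclic_parents p" by (rule search_tree_acyclic[OF st])
  note q = rotate_down_pendant_to_other_eq[OF st cx d]
  have x_child: "p z = Some x \<Longrightarrow> z = c" for z by (rule pendant_child_above_v(2)[OF st cx])
  have "p x \<noteq> Some x" "x \<noteq> c" "d \<noteq> c" "d \<noteq> x" "d \<in> subtree p c"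
    using parent_neq[OF acyc] cx d(1) child_in_subtree[of p d c] parent_notin_subtree[OF acyc cx]
    by auto
  show "drop_pendant (rotate F p x c) = drop_pendant p"
  proof
    fix y
    consider "y = x" | "y = c" | "y = d" | "y \<notin> {x, c, d}" by blast
    then show "drop_pendant (rotate F p x c) y = drop_pendant p y"
    proof cases
      case 4
      then have "p y \<noteq> Some x" using x_child by blast
      with 4 show ?thesis by (simp add: q drop_pendant_def)
    qed (use cx d(1) \<open>p x \<noteq> Some x\<close> \<open>x \<noteq> c\<close> \<open>d \<noteq> c\<close> \<open>d \<noteq> x\<close>
      in \<open>simp_all add: q drop_pendant_def\<close>)
  qed
  have "subtree p x = insert x (subtree p c)"
    using subtree_unique_child[of p c x, OF cx] x_child by blast
  moreover have "subtree p c = insert c (subtree p d)"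
    using subtree_unique_child[of p d c, OF d(1)] child_eq_child_above_v[OF st d] by blast
  ultimately have p_sub: "subtree p x = insert x (insert c (subtree p d))" by simp
  note q_sub = subtree_rotate_down_pendant_to_other[OF st cx d]
  have "x \<notin> subtree p d" "c \<notin> subtree p d"
    using parent_notin_subtree[OF acyc d(1)] \<open>d \<in> subtree p c\<close> parent_notin_subtree[OF acyc cx]
      subtree_trans[of x p d c] by auto
  moreover have "finite (subtree p d)"
    using finite_subset[OF search_tree_subtree_subset[OF st] finite_V[THEN finite.insertI]]
      search_tree_parent_mem(1)[OF st d(1)] by simp
  ultimately have "card (subtree p x) = Suc (card (subtree (rotate F p x c) x))"
    using q_sub p_sub \<open>x \<noteq> c\<close> by simp
  moreover have "subtree p x \<noteq> {x}" "subtree (rotate F p x c) x \<noteq> {x}"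
    using p_sub q_sub d(2) x_neq_v \<open>x \<noteq> c\<close> by auto
  ultimately show "pendant_label (rotate F p x c) \<noteq> pendant_label p"
    using pendant_label_card_Suc by metis
qed

lemma rotate_at_pendant:
  assumes st: "search_tree F W r p" and wu: "p w = Some u" and "u = x \<or> w = x"
  shows "drop_pendant (rotate F p u w) = drop_pendant p"
    and "pendant_label (rotate F p u w) \<noteq> pendant_label p"
proof -
  consider "w = x" "v \<notin> subtree p x" | "w = x" "v \<in> subtree p x" | "u = x" "w = v" | "u = x" "w \<noteq> v"
    using assms(3) by blast
  then have "drop_pendant (rotate F p u w) = drop_pendant p \<and>
      pendant_label (rotate F p u w) \<noteq> pendant_label p"
  proof cases
    case 1
    then show ?thesis using rotate_up_pendant_leaf[OF st] wu by simp
  next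
    case 2
    then show ?thesis using rotate_up_pendant_inner[OF st] wu by simp
  next
    case 3
    then show ?thesis using rotate_down_pendant_to_v[OF st] wu by simp
  next
    case 4
    then obtain d where "p d = Some w" "v \<in> subtree p d"
      using mem_subtree_iff_child[of v p w] pendant_child_above_v(1)[OF st] wu by force
    then show ?thesis using rotate_down_pendant_to_other[OF st] wu 4 by simp
  qed
  then show "drop_pendant (rotate F p u w) = drop_pendant p"
    and "pendant_label (rotate F p u w) \<noteq> pendant_label p" by simp_all
qed

text \<open>Whether a subtree moves in a rotation below \<open>u\<close> is decided alike in \<open>G\<^sub>v\<close> and, after
  deleting \<open>x\<close>, in \<open>G\<close>; for \<open>u = v\<close> both sides hold, witnessed by \<open>z\<close>.\<close>

lemma pendant_adjacent_iff:
  assumes "u \<noteq> x" "z \<in> S" "z \<in> V" "z \<noteq> u"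
  shows "(\<exists>t\<in>S. F u t) \<longleftrightarrow> (\<exists>t\<in>S - {x}. E u t)"
proof (cases "u = v")
  case True
  then have "F u z" "E u z" using assms(3,4) v_universal F_v_universal by auto
  then show ?thesis using assms(2,3) x_notin_V by blast
next
  case False
  then have "F u t \<longleftrightarrow> t \<noteq> x \<and> E u t" for t
    using F_x_right[of u] F_iff_E[OF assms(1)] by (cases "t = x") auto
  then show ?thesis by blast
qed

lemma drop_pendant_rotate_other:
  assumes st: "search_tree F W r p" and wu: "p w = Some u" and "u \<noteq> x" "w \<noteq> x" "y \<notin> {x, u, w}"
  shows "drop_pendant (rotate F p u w) y = rotate E (drop_pendant p) u w y"
proof -
  have acyc: "acyclic_parents p" by (rule search_tree_acyclic[OF st])
  have y: "y \<noteq> x" "y \<noteq> u" "y \<noteq> w" using assms(5) by auto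
  have q: "rotate F p u w y = (if p y = Some w \<and> (\<exists>t\<in>subtree p y. F u t) then Some u else p y)"
    and q': "rotate E (drop_pendant p) u w y = (if drop_pendant p y = Some w \<and>
      (\<exists>t\<in>subtree (drop_pendant p) y. E u t) then Some u else drop_pendant p y)"
    using y by (simp_all add: rotate_def)
  show ?thesis
  proof (cases "p y = Some x")
    case True
    have "p x = Some w \<Longrightarrow> (\<exists>t\<in>subtree p x. F u t) \<longleftrightarrow> (\<exists>t\<in>subtree p x - {x}. E u t)"
      using pendant_adjacent_iff[OF \<open>u \<noteq> x\<close>, of y "subtree p x"] child_in_subtree[of p y x] True
        search_tree_parent_mem(1)[OF st True] y by simp
    moreover have "subtree p x - {x} = subtree (drop_pendant p) y"
    proof -
      have "subtree p x = insert x (subtree p y)"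
        using subtree_unique_child[of p y x, OF True] pendant_child_above_v(2)[OF st True] by blast
      then show ?thesis
        using drop_pendant_subtree[of y p] y parent_notin_subtree[OF acyc True] by auto
    qed
    moreover have "rotate F p u w x = (if p x = Some w \<and> (\<exists>t\<in>subtree p x. F u t) then Some u else p x)"
      using \<open>u \<noteq> x\<close> \<open>w \<noteq> x\<close> by (simp add: rotate_def)
    moreover have "drop_pendant p y = p x" using True y by (simp add: drop_pendant_def)
    moreover have "drop_pendant (rotate F p u w) y = rotate F p u w x"
      using True q y \<open>w \<noteq> x\<close> by (simp add: drop_pendant_def)
    ultimately show ?thesis using q' by (cases "p x = Some w") simp_all
  next
    case False
    have "p y = Some w \<Longrightarrow> (\<exists>t\<in>subtree p y. F u t) \<longleftrightarrow> (\<exists>t\<in>subtree p y - {x}. E u t)"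
      using pendant_adjacent_iff[OF \<open>u \<noteq> x\<close>, of y "subtree p y"] subtree_self[of y p]
        search_tree_parent_mem(1)[OF st, of y w] y by simp
    moreover have "subtree p y - {x} = subtree (drop_pendant p) y"
      using drop_pendant_subtree[of y p] y by simp
    moreover have "drop_pendant p y = p y" using False y by (simp add: drop_pendant_def)
    moreover have "drop_pendant (rotate F p u w) y = rotate F p u w y"
      using False q y \<open>u \<noteq> x\<close> by (auto simp: drop_pendant_def)
    ultimately show ?thesis using q q' by (cases "p y = Some w") simp_all
  qed
qed

lemma drop_pendant_rotate:
  assumes st: "search_tree F W r p" and wu: "p w = Some u" and "u \<noteq> x" "w \<noteq> x"
  shows "drop_pendant (rotate F p u w) = rotate E (drop_pendant p) u w"
proof
  fix y
  have "u \<noteq> w" using parent_neq[OF search_tree_acyclic[OF st]] wu by blast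
  have dw: "drop_pendant p w = Some u" using wu \<open>w \<noteq> x\<close> \<open>u \<noteq> x\<close> by (simp add: drop_pendant_def)
  note rot_F = rotate_at_child[where E=F and p=p and u=u and w=w, OF wu \<open>u \<noteq> w\<close>]
    rotate_at_parent[where E=F and p=p and u=u and w=w, OF wu \<open>u \<noteq> w\<close>]
    rotate_other[where E=F and p=p and u=u and w=w, OF wu \<open>u \<noteq> w\<close>]
  note rot_E = rotate_at_child[where E=E and p="drop_pendant p" and u=u and w=w, OF dw \<open>u \<noteq> w\<close>]
    rotate_at_parent[where E=E and p="drop_pendant p" and u=u and w=w, OF dw \<open>u \<noteq> w\<close>]
    rotate_other[where E=E and p="drop_pendant p" and u=u and w=w, OF dw \<open>u \<noteq> w\<close>]
  consider "y = x" | "y = u" | "y = w" | "y \<notin> {x, u, w}" by blast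
  then show "drop_pendant (rotate F p u w) y = rotate E (drop_pendant p) u w y"
  proof cases
    case 1
    then show ?thesis using rot_E(3) \<open>u \<noteq> x\<close> \<open>w \<noteq> x\<close> by (simp add: drop_pendant_def)
  next
    case 2
    then show ?thesis using rot_F(2) rot_E(2) \<open>u \<noteq> x\<close> \<open>w \<noteq> x\<close> by (simp add: drop_pendant_def)
  next
    case 3
    have "p x \<noteq> Some w" if "p u = Some x"
    proof
      assume "p x = Some w"
      then have "(parent_rel p)\<^sup>+\<^sup>+ w w"
        using wu that by (meson tranclp.r_into_trancl tranclp.trancl_into_trancl)
      then show False using search_tree_acyclic[OF st] by blast
    qed
    then show ?thesis
      using 3 rot_F(1) rot_F(3)[of x] rot_E(1) \<open>u \<noteq> x\<close> \<open>w \<noteq> x\<close>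
      by (auto simp: drop_pendant_def)
  next
    case 4
    then show ?thesis by (rule drop_pendant_rotate_other[OF st wu \<open>u \<noteq> x\<close> \<open>w \<noteq> x\<close>])
  qed
qed

lemma pendant_label_rotate:
  assumes "p w = Some u" "u \<noteq> w" "u \<noteq> x" "w \<noteq> x"
  shows "pendant_label (rotate F p u w) = pendant_label p"
  using rotate_subtree_other[where E=F and p=p and u=u and w=w and y=x, OF assms(1,2)] assms(3,4)
  by (simp add: pendant_label_def)

lemma rot_step_pendant_colours_differ:
  assumes col: "proper_colouring (rot_vertices E V) (rot_adj E V) k c" and "3 \<le> k"
    and "p \<in> rot_vertices F W" "q \<in> rot_vertices F W" and step: "rot_step F p q"
  shows "(c (drop_pendant p) + pendant_label p) mod k \<noteq> (c (drop_pendant q) + pendant_label q) mod k"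
proof
  assume eq: "(c (drop_pendant p) + pendant_label p) mod k = (c (drop_pendant q) + pendant_label q) mod k"
  obtain r r' where st: "search_tree F W r p" and st': "search_tree F W r' q"
    using assms(3,4) by (auto simp: rot_vertices_def is_search_tree_def)
  obtain u w where wu: "p w = Some u" and q: "q = rotate F p u w"
    using step by (auto simp: rot_step_def)
  show False
  proof (cases "u = x \<or> w = x")
    case True
    then have "drop_pendant q = drop_pendant p" "pendant_label q \<noteq> pendant_label p"
      using rotate_at_pendant[OF st wu] q by simp_all
    moreover have "pendant_label p < k" "pendant_label q < k"
      using pendant_label_less_3 \<open>3 \<le> k\<close> less_le_trans by blast+
    ultimately show False using eq mod_add_left_cancel_less by metis
  next
    case False
    then have "u \<noteq> x" "w \<noteq> x" by simp_all
    have "u \<noteq> w" using parent_neq[OF search_tree_acyclic[OF st]] wu by blast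
    have "pendant_label q = pendant_label p"
      using pendant_label_rotate[of p w u, OF wu \<open>u \<noteq> w\<close> \<open>u \<noteq> x\<close> \<open>w \<noteq> x\<close>] q by simp
    moreover have "rot_step E (drop_pendant p) (drop_pendant q)"
    proof -
      have "drop_pendant p w = Some u" using wu \<open>u \<noteq> x\<close> \<open>w \<noteq> x\<close> by (simp add: drop_pendant_def)
      moreover have "drop_pendant q = rotate E (drop_pendant p) u w"
        using drop_pendant_rotate[OF st wu \<open>u \<noteq> x\<close> \<open>w \<noteq> x\<close>] q by simp
      ultimately show ?thesis unfolding rot_step_def by blast
    qed
    moreover have "drop_pendant p \<in> rot_vertices E V" "drop_pendant q \<in> rot_vertices E V"
      using search_tree_drop_pendant[OF st] search_tree_drop_pendant[OF st']
      by (auto simp: rot_vertices_def is_search_tree_def)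
    ultimately have "c (drop_pendant p) \<noteq> c (drop_pendant q)"
      "c (drop_pendant p) < k" "c (drop_pendant q) < k"
      using col by (auto simp: proper_colouring_def rot_adj_def)
    moreover have "(pendant_label p + c (drop_pendant p)) mod k = (pendant_label p + c (drop_pendant q)) mod k"
      using eq \<open>pendant_label q = pendant_label p\<close> by (simp add: add.commute)
    ultimately show False using mod_add_left_cancel_less by blast
  qed
qed

lemma proper_colouring_pendant:
  assumes "proper_colouring (rot_vertices E V) (rot_adj E V) k c" "3 \<le> k"
  shows "proper_colouring (rot_vertices F W) (rot_adj F W) k
    (\<lambda>p. (c (drop_pendant p) + pendant_label p) mod k)"
  unfolding proper_colouring_def
proof (intro conjI ballI impI)
  fix p q assume "p \<in> rot_vertices F W" "q \<in> rot_vertices F W" "rot_adj F W p q"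
  then show "(c (drop_pendant p) + pendant_label p) mod k \<noteq> (c (drop_pendant q) + pendant_label q) mod k"
    using rot_step_pendant_colours_differ[OF assms] by (metis rot_adj_def)
qed (use \<open>3 \<le> k\<close> in simp)

lemma chromatic_number_pendant_le:
  assumes "3 \<le> chromatic_number (rot_vertices E V) (rot_adj E V)"
  shows "chromatic_number (rot_vertices F W) (rot_adj F W) \<le> chromatic_number (rot_vertices E V) (rot_adj E V)"
proof -
  obtain f where "proper_colouring (rot_vertices E V) (rot_adj E V) (card (rot_vertices E V)) f"
    using proper_colouring_card[OF rot_vertices_finite[OF finite_V]] rot_adj_irrefl by blast
  then obtain c where "proper_colouring (rot_vertices E V) (rot_adj E V)
      (chromatic_number (rot_vertices E V) (rot_adj E V)) c"
    using proper_colouring_chromatic_number by blast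
  then show ?thesis using proper_colouring_pendant[OF _ assms] chromatic_number_le by blast
qed

lemma chromatic_number_le_pendant:
  "chromatic_number (rot_vertices E V) (rot_adj E V) \<le> chromatic_number (rot_vertices F W) (rot_adj F W)"
proof -
  obtain f where col: "proper_colouring (rot_vertices F W) (rot_adj F W) (card (rot_vertices F W)) f"
    using proper_colouring_card[OF rot_vertices_finite] finite_V rot_adj_irrefl by blast
  show ?thesis
  proof (rule chromatic_number_hom_le[OF col])
    show "add_root V x ` rot_vertices E V \<subseteq> rot_vertices F W"
      using search_tree_add_root[OF symp_F _ F_agrees_E x_notin_V connected_on_F]
      by (auto simp: rot_vertices_def is_search_tree_def)
    show "rot_adj F W (add_root V x p) (add_root V x q)" if "rot_adj E V p q" for p q
      by (rule rot_adj_add_root[OF symp_F F_agrees_E x_notin_V connected_on_F that])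
  qed
qed

end

theorem corollary3p3:
  fixes E :: "'a \<Rightarrow> 'a \<Rightarrow> bool" and V :: "'a set" and v x :: 'a
  assumes "finite V"
    and "\<forall>a b. E a b \<longrightarrow> a \<in> V \<and> b \<in> V"
    and "\<forall>a b. E a b \<longrightarrow> E b a"
    and "\<forall>a. \<not> E a a"
    and "connected_on E V"
    and "\<exists>a\<in>V. \<exists>b\<in>V. a \<noteq> b \<and> \<not> E a b"
    and "v \<in> V" and "\<forall>w\<in>V. w \<noteq> v \<longrightarrow> E v w"
    and "x \<notin> V"
  shows "chromatic_number (rot_vertices E V) (rot_adj E V) =
         chromatic_number (rot_vertices (add_pendant E v x) (insert x V))
                          (rot_adj (add_pendant E v x) (insert x V))"
proof -
  interpret pendant_extension E V v x
    using assms(1-3,7-9) by unfold_locales (auto simp: symp_def)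
  obtain a b where "a \<in> V" "b \<in> V" "a \<noteq> b" "\<not> E a b" using assms(6) by blast
  then have "has_closed_walk_5 (rot_adj E V)"
    by (rule rotation_graph_has_closed_walk_5[OF symp_E finite_V v_in_V v_universal])
  then have "3 \<le> chromatic_number (rot_vertices E V) (rot_adj E V)"
    by (rule chromatic_number_rotation_graph_ge_3[OF finite_V])
  then show ?thesis
    using chromatic_number_pendant_le chromatic_number_le_pendant by (simp add: le_antisym)
qed

end
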